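(* For every pair of integers $r\ge 3$ and $t\ge 2$, with $s=\lfloor (t-1)/2\rfloor$, there exists a binary $(n,k,r,t)_{\mathrm{seq}}$ code whose rate satisfies $$\frac{k}{n}=\frac{r^{s+1}}{r^{s+1}+2\sum_{i=0}^{s}r^i}\ \text{ if $t$ is even},\qquad \frac{k}{n}=\frac{r^{s+1}}{r^{s+1}+2\sum_{i=1}^{s}r^i+1}\ \text{ if $t$ is odd}.$$
   Context: A binary code is a linear code over $\mathbb{F}_2$. Sequential-recovery LRC: an $(n,k,r,t)_{\mathrm{seq}}$ code is an $[n,k]$ linear code $\mathcal{C}\subseteq\mathbb{F}_q^n$ such that for every $E\subseteq[n]$ with $1\le|E|=u\le t$ there is an ordering $\ell_1,\dots,\ell_u$ of $E$ and sets $R_j\subseteq[n]$, $|R_j|\le r$, $R_j\cap\{\ell_j,\dots,\ell_u\}=\emptyset$, with coefficients $a_{j,i}\in\mathbb{F}_q$ such that $c_{\ell_j}=\sum_{i\in R_j}a_{j,i}c_i$ for all $c\in\mathcal{C}$, $j\in[u]$. *)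

theory Defs
  imports Main "HOL-Library.Z2" Complex_Main
begin

instance bit :: finite
proof
  have "UNIV = {0::bit, 1}" by (auto intro: bit.exhaust)
  then show "finite (UNIV :: bit set)" by (metis finite.emptyI finite.insertI)
qed

text \<open>Words of length n over a field 'a are functions nat => 'a vanishing outside {0..<n};
  coordinate positions are 0..<n (the paper's [n]).\<close>

definition words :: "nat \<Rightarrow> (nat \<Rightarrow> 'a::zero) set" where
  "words n = {c. \<forall>i. n \<le> i \<longrightarrow> c i = 0}"

definition linear_code :: "nat \<Rightarrow> (nat \<Rightarrow> 'a::field) set \<Rightarrow> bool" where
  "linear_code n C \<longleftrightarrow> C \<subseteq> words n \<and> (\<lambda>_. 0) \<in> C
     \<and> (\<forall>c\<in>C. \<forall>d\<in>C. (\<lambda>i. c i + d i) \<in> C)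
     \<and> (\<forall>a. \<forall>c\<in>C. (\<lambda>i. a * c i) \<in> C)"

text \<open>An [n,k] linear code over a finite field F_q: a subspace of dimension k,
  i.e. a subspace with exactly q^k codewords.\<close>
definition nk_code :: "nat \<Rightarrow> nat \<Rightarrow> (nat \<Rightarrow> 'a::{field,finite}) set \<Rightarrow> bool" where
  "nk_code n k C \<longleftrightarrow> linear_code n C \<and> card C = card (UNIV :: 'a set) ^ k"

definition seq_LRC :: "nat \<Rightarrow> nat \<Rightarrow> nat \<Rightarrow> nat \<Rightarrow> (nat \<Rightarrow> 'a::{field,finite}) set \<Rightarrow> bool" where
  "seq_LRC n k r t C \<longleftrightarrow> nk_code n k C \<and>
     (\<forall>E. E \<subseteq> {0..<n} \<and> 1 \<le> card E \<and> card E \<le> t \<longrightarrow>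
        (\<exists>ls. distinct ls \<and> set ls = E \<and>
           (\<forall>j < length ls. \<exists>R a. R \<subseteq> {0..<n} \<and> card R \<le> r \<and>
               R \<inter> set (drop j ls) = {} \<and>
               (\<forall>c\<in>C. c (ls ! j) = (\<Sum>i\<in>R. a i * c i)))))"

end

theory Submission
  imports Defs "HOL-Library.FuncSet" "HOL-Library.Nat_Bijection" "HOL-Library.Countable"
begin

text \<open>
  The code lives on a graph in which every vertex carries r + 1 darts and some edges are
  semi-edges with a single end. The coordinates are the edges, and every vertex requires the
  labels of its r + 1 edges to sum to zero. One edge at each vertex is computed from the others,
  so a graph with V vertices and P semi-edges gives 2k = (r - 1) V + P and 2n = (r + 1) V + P.

  An erasure pattern of at most t edges can be repaired one edge at a time. Otherwise every end
  of an erased edge meets another erased edge at its vertex, and following erased edges produces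
  either a cycle or a walk joining two semi-edges; large girth and a large distance between
  semi-edges make either one longer than t.

  Suitable small graphs come from r-ary trees of depth s: two copies joined at their leaves when
  t is even, r + 1 copies sharing their leaves when t is odd; the semi-edges sit at the roots.
  Their girth is then raised by iterated voltage covers, which preserve the local structure,
  the distance between semi-edges and the ratio P : V, hence the rate.
\<close>

section \<open>Codes\<close>

lemma card_vanishing_outside:
  assumes "finite A"
  shows "card {f :: 'a \<Rightarrow> 'b::{zero,finite}. \<forall>x. x \<notin> A \<longrightarrow> f x = 0} = card (UNIV :: 'b set) ^ card A"
proof -
  let ?V = "{f :: 'a \<Rightarrow> 'b. \<forall>x. x \<notin> A \<longrightarrow> f x = 0}"
  have "bij_betw (\<lambda>f. restrict f A) ?V (PiE A (\<lambda>_. UNIV))"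
  proof (rule bij_betw_byWitness[where f' = "\<lambda>g x. if x \<in> A then g x else 0"])
    show "\<forall>f\<in>?V. (\<lambda>x. if x \<in> A then restrict f A x else 0) = f"
      by (auto simp: fun_eq_iff)
    show "\<forall>g\<in>PiE A (\<lambda>_. UNIV). restrict (\<lambda>x. if x \<in> A then g x else 0) A = g"
      by (auto simp: fun_eq_iff PiE_def extensional_def)
  qed auto
  then have "card ?V = card (PiE A (\<lambda>_. UNIV :: 'b set))"
    by (rule bij_betw_same_card)
  then show ?thesis
    using assms by (simp add: card_PiE)
qed

lemma seq_LRC_if_repairable:
  fixes C :: "(nat \<Rightarrow> 'a::{field,finite}) set"
  assumes code: "nk_code n k C"
    and repair: "\<And>E. E \<subseteq> {0..<n} \<Longrightarrow> E \<noteq> {} \<Longrightarrow> card E \<le> t \<Longrightarrow>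
       \<exists>i\<in>E. \<exists>R a. R \<subseteq> {0..<n} \<and> card R \<le> r \<and> R \<inter> E = {} \<and>
         (\<forall>c\<in>C. c i = (\<Sum>j\<in>R. a j * c j))"
  shows "seq_LRC n k r t C"
  unfolding seq_LRC_def
proof (intro conjI code allI impI)
  fix E :: "nat set"
  assume "E \<subseteq> {0..<n} \<and> 1 \<le> card E \<and> card E \<le> t"
  then show "\<exists>ls. distinct ls \<and> set ls = E \<and>
           (\<forall>j < length ls. \<exists>R a. R \<subseteq> {0..<n} \<and> card R \<le> r \<and>
               R \<inter> set (drop j ls) = {} \<and> (\<forall>c\<in>C. c (ls ! j) = (\<Sum>i\<in>R. a i * c i)))"
  proof (induction "card E" arbitrary: E rule: less_induct)
    case less
    then have E: "E \<subseteq> {0..<n}" "E \<noteq> {}" "card E \<le> t" and fin: "finite E"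
      using finite_subset by fastforce+
    obtain i R a where i: "i \<in> E" and R: "R \<subseteq> {0..<n}" "card R \<le> r" "R \<inter> E = {}"
      and rec: "\<forall>c\<in>C. c i = (\<Sum>j\<in>R. a j * c j)"
      using repair[OF E] by blast
    show ?case
    proof (cases "E = {i}")
      case True
      then show ?thesis
        using R rec by (intro exI[of _ "[i]"]) auto
    next
      case False
      have lt: "card (E - {i}) < card E"
        using fin i by (rule card_Diff1_less)
      have "E - {i} \<noteq> {}"
        using False i by auto
      then have sub: "E - {i} \<subseteq> {0..<n} \<and> 1 \<le> card (E - {i}) \<and> card (E - {i}) \<le> t"
        using fin E lt by (auto simp: Suc_le_eq card_gt_0_iff)
      obtain ls where ls: "distinct ls" "set ls = E - {i}"
        "\<forall>j < length ls. \<exists>R a. R \<subseteq> {0..<n} \<and> card R \<le> r \<and>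
               R \<inter> set (drop j ls) = {} \<and> (\<forall>c\<in>C. c (ls ! j) = (\<Sum>i\<in>R. a i * c i))"
        using less.hyps[OF lt sub] by blast
      show ?thesis
      proof (intro exI[of _ "i # ls"] conjI allI impI)
        show "distinct (i # ls)" "set (i # ls) = E"
          using ls i by auto
        fix j assume "j < length (i # ls)"
        show "\<exists>R a. R \<subseteq> {0..<n} \<and> card R \<le> r \<and> R \<inter> set (drop j (i # ls)) = {} \<and>
               (\<forall>c\<in>C. c ((i # ls) ! j) = (\<Sum>i\<in>R. a i * c i))"
        proof (cases j)
          case 0
          then show ?thesis
            using R rec ls(2) i by (intro exI[of _ R] exI[of _ a]) auto
        next
          case (Suc j')
          then show ?thesis
            using ls(3) \<open>j < length (i # ls)\<close> by simp
        qed
      qed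
    qed
  qed
qed

section \<open>Graphs with semi-edges\<close>

text \<open>A graph, possibly with parallel edges and semi-edges, is given by its set of darts D.
  The involution iv maps a dart to the other dart of its edge; its fixed points are the
  semi-edges. Every vertex has a distinguished root dart, and vt maps each dart to the root
  of its vertex, so that the vertices correspond to the fixed points of vt.\<close>

locale dart_graph =
  fixes D :: "'d set" and iv vt :: "'d \<Rightarrow> 'd"
  assumes finite_darts: "finite D"
    and iv_in: "d \<in> D \<Longrightarrow> iv d \<in> D"
    and iv_iv: "d \<in> D \<Longrightarrow> iv (iv d) = d"
    and vt_in: "d \<in> D \<Longrightarrow> vt d \<in> D"
    and vt_vt: "d \<in> D \<Longrightarrow> vt (vt d) = vt d"

definition edge :: "('d \<Rightarrow> 'd) \<Rightarrow> 'd \<Rightarrow> 'd set" where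
  "edge iv d = {d, iv d}"

text \<open>A dart d is traversed from vt d to vt (iv d). Walks use proper edges only and never
  immediately return along the edge just used; a closed walk must moreover not backtrack where
  it closes up.\<close>

definition nb_walk :: "'d set \<Rightarrow> ('d \<Rightarrow> 'd) \<Rightarrow> ('d \<Rightarrow> 'd) \<Rightarrow> 'd list \<Rightarrow> bool" where
  "nb_walk D iv vt ws \<longleftrightarrow> set ws \<subseteq> D \<and> (\<forall>d\<in>set ws. iv d \<noteq> d) \<and>
     (\<forall>i. Suc i < length ws \<longrightarrow> vt (iv (ws ! i)) = vt (ws ! Suc i) \<and> ws ! Suc i \<noteq> iv (ws ! i))"

definition closed_nb_walk :: "('d \<Rightarrow> 'd) \<Rightarrow> ('d \<Rightarrow> 'd) \<Rightarrow> 'd list \<Rightarrow> bool" where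
  "closed_nb_walk iv vt ws \<longleftrightarrow>
     ws \<noteq> [] \<and> vt (iv (last ws)) = vt (hd ws) \<and> hd ws \<noteq> iv (last ws)"

definition girth_gt :: "nat \<Rightarrow> 'd set \<Rightarrow> ('d \<Rightarrow> 'd) \<Rightarrow> ('d \<Rightarrow> 'd) \<Rightarrow> bool" where
  "girth_gt g D iv vt \<longleftrightarrow> (\<forall>ws. nb_walk D iv vt ws \<and> closed_nb_walk iv vt ws \<longrightarrow> g < length ws)"

text \<open>A walk ws runs from vt (hd ws) to vt (iv (last ws)); here both of these roots are
  semi-edges.\<close>

definition semi_dist_ge :: "nat \<Rightarrow> 'd set \<Rightarrow> ('d \<Rightarrow> 'd) \<Rightarrow> ('d \<Rightarrow> 'd) \<Rightarrow> bool" where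
  "semi_dist_ge m D iv vt \<longleftrightarrow> (\<forall>ws. nb_walk D iv vt ws \<and> ws \<noteq> [] \<and>
      iv (vt (hd ws)) = vt (hd ws) \<and> iv (vt (iv (last ws))) = vt (iv (last ws)) \<longrightarrow> m \<le> length ws)"

lemma edge_eq_iff:
  assumes "iv (iv a) = a" "iv (iv b) = b"
  shows "edge iv a = edge iv b \<longleftrightarrow> b = a \<or> b = iv a"
  using assms unfolding edge_def by (auto simp: doubleton_eq_iff)

lemma nb_walk_map_upt:
  assumes "\<And>k. a \<le> k \<Longrightarrow> k < b \<Longrightarrow> w k \<in> D \<and> iv (w k) \<noteq> w k"
    and "\<And>k. a \<le> k \<Longrightarrow> Suc k < b \<Longrightarrow> vt (iv (w k)) = vt (w (Suc k)) \<and> w (Suc k) \<noteq> iv (w k)"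
  shows "nb_walk D iv vt (map w [a..<b])"
  unfolding nb_walk_def
proof (intro conjI allI impI ballI subsetI)
  show "x \<in> D" "iv x \<noteq> x" if "x \<in> set (map w [a..<b])" for x
    using that assms(1) by auto
  fix i assume "Suc i < length (map w [a..<b])"
  then show "vt (iv (map w [a..<b] ! i)) = vt (map w [a..<b] ! Suc i)"
    and "map w [a..<b] ! Suc i \<noteq> iv (map w [a..<b] ! i)"
    using assms(2)[of "a + i"] by simp_all
qed

lemma closed_nb_walk_map_upt:
  "a < b \<Longrightarrow> closed_nb_walk iv vt (map w [a..<b]) \<longleftrightarrow>
     vt (iv (w (b - 1))) = vt (w a) \<and> w a \<noteq> iv (w (b - 1))"
  by (simp add: closed_nb_walk_def last_map hd_map)

lemma nb_walk_sublist:
  assumes "nb_walk D iv vt ps" "b \<le> length ps"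
  shows "nb_walk D iv vt (map ((!) ps) [a..<b])"
proof (rule nb_walk_map_upt)
  fix k assume "a \<le> k" "k < b"
  then show "ps ! k \<in> D \<and> iv (ps ! k) \<noteq> ps ! k"
    using assms nth_mem[of k ps] unfolding nb_walk_def by auto
next
  fix k assume "a \<le> k" "Suc k < b"
  then show "vt (iv (ps ! k)) = vt (ps ! Suc k) \<and> ps ! Suc k \<noteq> iv (ps ! k)"
    using assms unfolding nb_walk_def by auto
qed

lemma no_loop:
  assumes "girth_gt g D iv vt" "0 < g" "d \<in> D" "iv d \<noteq> d"
  shows "vt (iv d) \<noteq> vt d"
proof
  assume "vt (iv d) = vt d"
  then have "nb_walk D iv vt [d]" "closed_nb_walk iv vt [d]"
    using assms by (auto simp: nb_walk_def closed_nb_walk_def)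
  then show False
    using assms(1,2) unfolding girth_gt_def by fastforce
qed

context dart_graph
begin

lemma edge_iv: "d \<in> D \<Longrightarrow> edge iv (iv d) = edge iv d"
  by (auto simp: edge_def iv_iv)

lemma edge_eq: "a \<in> D \<Longrightarrow> b \<in> D \<Longrightarrow> edge iv a = edge iv b \<longleftrightarrow> b = a \<or> b = iv a"
  by (rule edge_eq_iff) (simp_all add: iv_iv)

lemma edge_disjoint: "a \<in> D \<Longrightarrow> b \<in> D \<Longrightarrow> edge iv a \<noteq> edge iv b \<Longrightarrow> edge iv a \<inter> edge iv b = {}"
  unfolding edge_def using iv_iv by auto metis+

text \<open>A repeated edge in a closed walk cuts out a shorter closed walk; for a reversed repetition
  the closing condition may fail, but then a repetition with a smaller gap is nested inside.\<close>

lemma closed_nb_walk_shorten: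
  assumes walk: "nb_walk D iv vt ps" "closed_nb_walk iv vt ps"
    and "i < j" "j < length ps" "edge iv (ps ! i) = edge iv (ps ! j)"
  shows "\<exists>ps'. nb_walk D iv vt ps' \<and> closed_nb_walk iv vt ps' \<and> length ps' < length ps"
  using assms(3-)
proof (induction "j - i" arbitrary: i j rule: less_induct)
  case less
  have in_D: "ps ! k \<in> D" "iv (ps ! k) \<noteq> ps ! k" if "k < length ps" for k
    using walk that by (auto simp: nb_walk_def)
  have step: "vt (iv (ps ! k)) = vt (ps ! Suc k)" "ps ! Suc k \<noteq> iv (ps ! k)"
    if "Suc k < length ps" for k
    using walk that by (auto simp: nb_walk_def)
  have sub: "nb_walk D iv vt (map ((!) ps) [a..<j])" for a
    using nb_walk_sublist[OF walk(1)] less.prems by simp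
  have "ps ! j = ps ! i \<or> ps ! j = iv (ps ! i)"
    using less.prems edge_eq[OF in_D(1) in_D(1)] by simp
  then show ?case
  proof
    assume "ps ! j = ps ! i"
    then have "closed_nb_walk iv vt (map ((!) ps) [i..<j])"
      using less.prems step[of "j - 1"] by (simp add: closed_nb_walk_map_upt)
    then show ?thesis
      using sub less.prems by fastforce
  next
    assume rev: "ps ! j = iv (ps ! i)"
    then have "Suc i < j"
      using less.prems step(2)[of i] by (metis Suc_lessI)
    show ?thesis
    proof (cases "ps ! Suc i = iv (ps ! (j - 1))")
      case True
      then have "Suc i \<noteq> j - 1"
        using in_D(2)[of "Suc i"] less.prems by auto
      then have "Suc i < j - 1"
        using \<open>Suc i < j\<close> by linarith
      moreover have "edge iv (ps ! Suc i) = edge iv (ps ! (j - 1))"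
        using True less.prems by (simp add: edge_iv[symmetric] in_D)
      ultimately show ?thesis
        using less.hyps[of "j - 1" "Suc i"] less.prems by simp
    next
      case False
      then have "closed_nb_walk iv vt (map ((!) ps) [Suc i..<j])"
        using less.prems step[of "j - 1"] step[of i] rev \<open>Suc i < j\<close>
        by (simp add: closed_nb_walk_map_upt)
      then show ?thesis
        using sub less.prems by fastforce
    qed
  qed
qed

section \<open>Stopping sets\<close>

context
  fixes w :: "nat \<Rightarrow> 'd"
  assumes w_in: "\<And>k. w k \<in> D"
    and w_step: "\<And>k. vt (iv (w k)) = vt (w (Suc k))"
    and w_nb: "\<And>k. w (Suc k) \<noteq> iv (w k)"
begin

lemma nb_walk_segment:
  assumes "\<And>k. a \<le> k \<Longrightarrow> k < b \<Longrightarrow> iv (w k) \<noteq> w k"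
  shows "nb_walk D iv vt (map w [a..<b])"
  by (rule nb_walk_map_upt) (use assms w_in w_step w_nb in auto)

lemma girth_lt_segment:
  assumes "girth_gt t D iv vt" "a < b"
    and proper: "\<And>k. a \<le> k \<Longrightarrow> k < b \<Longrightarrow> iv (w k) \<noteq> w k"
    and "vt (w b) = vt (w a)" "w a \<noteq> iv (w (b - 1))"
  shows "t < b - a"
proof -
  have "closed_nb_walk iv vt (map w [a..<b])"
    using assms w_step[of "b - 1"] by (simp add: closed_nb_walk_map_upt)
  then show ?thesis
    using assms(1) nb_walk_segment[OF proper] unfolding girth_gt_def by fastforce
qed

lemma repeated_edge_bound:
  assumes girth: "girth_gt t D iv vt"
    and proper: "\<And>j. 1 \<le> j \<Longrightarrow> j < J \<Longrightarrow> iv (w j) \<noteq> w j"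
    and distinct: "\<And>i j. i < j \<Longrightarrow> j < J \<Longrightarrow> edge iv (w i) \<noteq> edge iv (w j)"
    and repeat: "i < J" "edge iv (w i) = edge iv (w J)"
  shows "t < J"
proof -
  have "w J = w i \<or> w J = iv (w i)"
    using repeat(2) edge_eq[OF w_in w_in] by blast
  then consider "w J = iv (w i)" | "w J = w i" "iv (w i) \<noteq> w i"
    by fastforce
  then show ?thesis
  proof cases
    case 1
    then have "Suc i < J"
      using repeat(1) w_nb[of i] by (metis Suc_lessI)
    have "w (Suc i) \<noteq> iv (w (J - 1))"
    proof (cases "Suc i = J - 1")
      case True
      then show ?thesis
        using proper[of "J - 1"] \<open>Suc i < J\<close> by auto
    next
      case False
      then have "edge iv (w (Suc i)) \<noteq> edge iv (w (J - 1))"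
        using distinct \<open>Suc i < J\<close> by auto
      then show ?thesis
        using edge_iv w_in by metis
    qed
    then have "t < J - Suc i"
      by (intro girth_lt_segment[OF girth \<open>Suc i < J\<close>]) (use proper 1 w_step[of i] in auto)
    then show ?thesis
      by linarith
  next
    case 2
    have "iv (w k) \<noteq> w k" if "i \<le> k" "k < J" for k
      using proper[of k] 2 that by (cases "k = i") auto
    then have "t < J - i"
      by (intro girth_lt_segment[OF girth repeat(1)]) (use 2 w_nb[of "J - 1"] repeat(1) in auto)
    then show ?thesis
      by linarith
  qed
qed

lemma semi_edges_bound:
  assumes semi_root: "\<And>d. d \<in> D \<Longrightarrow> iv d = d \<Longrightarrow> vt d = d"
    and semi: "semi_dist_ge (t - 1) D iv vt"
    and proper: "\<And>j. 1 \<le> j \<Longrightarrow> j < J \<Longrightarrow> iv (w j) \<noteq> w j"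
    and semi_0: "iv (w 0) = w 0" and semi_J: "iv (w J) = w J" and "1 \<le> J"
  shows "t \<le> J"
proof -
  have root_0: "vt (w 0) = w 0" and root_J: "vt (w J) = w J"
    using semi_root w_in semi_0 semi_J by auto
  have "2 \<le> J"
  proof (rule ccontr)
    assume "\<not> 2 \<le> J"
    then have "J = 1"
      using \<open>1 \<le> J\<close> by simp
    then show False
      using w_step[of 0] w_nb[of 0] semi_0 root_0 root_J by simp
  qed
  let ?ws = "map w [1..<J]"
  have "nb_walk D iv vt ?ws"
    by (rule nb_walk_segment) (use proper in auto)
  moreover have "hd ?ws = w 1" "last ?ws = w (J - 1)" "?ws \<noteq> []"
    using \<open>2 \<le> J\<close> by (simp_all add: hd_map last_map)
  moreover have "vt (w 1) = w 0" "vt (iv (w (J - 1))) = w J"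
    using w_step[of 0] w_step[of "J - 1"] semi_0 root_0 root_J \<open>1 \<le> J\<close> by simp_all
  ultimately have "t - 1 \<le> length ?ws"
    using semi semi_0 semi_J unfolding semi_dist_ge_def by auto
  then show ?thesis
    using \<open>2 \<le> J\<close> by simp
qed

text \<open>Follow the walk until it first repeats an edge or meets a semi-edge: a repetition closes a
  cycle, longer than t by the girth; otherwise the walk runs between two semi-edges, which
  forces at least t - 1 steps strictly in between.\<close>

lemma stopping_walk_edges:
  assumes semi_root: "\<And>d. d \<in> D \<Longrightarrow> iv d = d \<Longrightarrow> vt d = d"
    and girth: "girth_gt t D iv vt" and semi: "semi_dist_ge (t - 1) D iv vt"
    and F: "F \<subseteq> D" and w_F: "\<And>k. w k \<in> F"
    and start: "(\<exists>d\<in>F. iv d = d) \<Longrightarrow> iv (w 0) = w 0"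
  shows "t < card (edge iv ` F)"
proof -
  have edges_le: "m \<le> card (edge iv ` F)"
    if "\<And>i j. i < j \<Longrightarrow> j < m \<Longrightarrow> edge iv (w i) \<noteq> edge iv (w j)" for m
  proof -
    have "inj_on (\<lambda>k. edge iv (w k)) {..<m}"
      by (rule linorder_inj_onI') (use that in auto)
    moreover have "finite F"
      using F finite_darts finite_subset by blast
    ultimately show ?thesis
      using card_inj_on_le[of _ "{..<m}" "edge iv ` F"] w_F by fastforce
  qed
  define repeat where "repeat j \<longleftrightarrow> iv (w j) = w j \<or> (\<exists>i<j. edge iv (w i) = edge iv (w j))" for j
  have "\<exists>j. 1 \<le> j \<and> repeat j"
  proof (rule ccontr)
    assume "\<not> ?thesis"
    then have "Suc (card (edge iv ` F)) \<le> card (edge iv ` F)"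
      by (intro edges_le) (auto simp: repeat_def)
    then show False
      by simp
  qed
  define J where "J = (LEAST j. 1 \<le> j \<and> repeat j)"
  have J: "1 \<le> J" "repeat J"
    using LeastI_ex[OF \<open>\<exists>j. 1 \<le> j \<and> repeat j\<close>] by (auto simp: J_def)
  have before_J: "\<not> repeat j" if "1 \<le> j" "j < J" for j
    using not_less_Least[of j "\<lambda>j. 1 \<le> j \<and> repeat j"] that by (auto simp: J_def)
  have proper: "iv (w j) \<noteq> w j" if "1 \<le> j" "j < J" for j
    using before_J[OF that] by (auto simp: repeat_def)
  have distinct: "edge iv (w i) \<noteq> edge iv (w j)" if "i < j" "j < J" for i j
    using before_J[of j] that by (auto simp: repeat_def)
  show ?thesis
  proof (cases "\<exists>i<J. edge iv (w i) = edge iv (w J)")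
    case True
    then have "t < J"
      using repeated_edge_bound[OF girth proper distinct] by blast
    moreover have "J \<le> card (edge iv ` F)"
      using edges_le distinct by blast
    ultimately show ?thesis
      by linarith
  next
    case False
    then have "iv (w J) = w J"
      using J(2) by (auto simp: repeat_def)
    then have "t \<le> J"
      using semi_edges_bound[OF semi_root semi proper] start w_F J(1) by blast
    moreover have "Suc J \<le> card (edge iv ` F)"
      by (rule edges_le) (use distinct False in \<open>auto simp: less_Suc_eq\<close>)
    ultimately show ?thesis
      by linarith
  qed
qed

end

lemma stopping_set_large:
  assumes semi_root: "\<And>d. d \<in> D \<Longrightarrow> iv d = d \<Longrightarrow> vt d = d"
    and girth: "girth_gt t D iv vt" and semi: "semi_dist_ge (t - 1) D iv vt"
    and F: "F \<subseteq> D" "F \<noteq> {}" "\<And>d. d \<in> F \<Longrightarrow> iv d \<in> F"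
    and shared: "\<And>d. d \<in> F \<Longrightarrow> \<exists>d'\<in>F. vt d' = vt d \<and> d' \<noteq> d"
  shows "t < card (edge iv ` F)"
proof -
  have "\<forall>d\<in>F. \<exists>d'. d' \<in> F \<and> vt d' = vt (iv d) \<and> d' \<noteq> iv d"
    using shared F(3) by metis
  then obtain succ where succ: "\<And>d. d \<in> F \<Longrightarrow> succ d \<in> F \<and> vt (succ d) = vt (iv d) \<and> succ d \<noteq> iv d"
    by (metis bchoice)
  have "\<exists>d0\<in>F. (\<exists>d\<in>F. iv d = d) \<longrightarrow> iv d0 = d0"
    using F(2) by blast
  then obtain d0 where d0: "d0 \<in> F" "(\<exists>d\<in>F. iv d = d) \<Longrightarrow> iv d0 = d0"
    by blast
  define w where "w k = (succ ^^ k) d0" for k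
  have w_F: "w k \<in> F" for k
    by (induction k) (simp_all add: w_def d0 succ)
  have w_step: "vt (iv (w k)) = vt (w (Suc k))" and w_nb: "w (Suc k) \<noteq> iv (w k)"
    and w_D: "w k \<in> D" for k
    using F(1) w_F[of k] succ[OF w_F[of k]] by (auto simp: w_def)
  have "w 0 = d0"
    by (simp add: w_def)
  then show ?thesis
    using stopping_walk_edges[of w, OF w_D w_step w_nb semi_root girth semi F(1) w_F] d0(2)
    by metis
qed

end

section \<open>The code of a graph\<close>

text \<open>By default the simplifier turns sums and products of bits into XOR and AND, which
  obstructs algebraic reasoning.\<close>

declare add_bit_eq_xor [simp del] mult_bit_eq_and [simp del]

text \<open>Edges whose darts are both non-roots carry the information; the root edge of a vertex is
  computed from the other edges there. At a non-root dart whose partner is a root,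
  the height h strictly drops, which orders these computations.\<close>

locale code_graph = dart_graph D iv vt
  for D :: "'d set" and iv vt +
  fixes h :: "'d \<Rightarrow> nat" and r m :: nat
  assumes semi_root: "d \<in> D \<Longrightarrow> iv d = d \<Longrightarrow> vt d = d"
    and semi_dist: "semi_dist_ge m D iv vt"
    and degree: "d \<in> D \<Longrightarrow> card {d'\<in>D. vt d' = vt d} = Suc r"
    and root_edge: "d \<in> D \<Longrightarrow> vt d = d \<Longrightarrow> vt (iv d) = iv d \<Longrightarrow> iv d = d"
    and root_height: "d \<in> D \<Longrightarrow> vt d \<noteq> d \<Longrightarrow> vt (iv d) = iv d \<Longrightarrow> h (iv d) < h (vt d)"
begin

definition info_darts :: "'d set" where
  "info_darts = {d\<in>D. vt d \<noteq> d \<and> vt (iv d) \<noteq> iv d}"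

text \<open>The label of the root edge at the root v, computed from the labels x of the information
  edges with recursion depth n; every n > h v gives the same value.\<close>

primrec root_value :: "('d set \<Rightarrow> bit) \<Rightarrow> nat \<Rightarrow> 'd \<Rightarrow> bit" where
  "root_value x 0 v = 0"
| "root_value x (Suc n) v = (\<Sum>d\<in>{d\<in>D. vt d = v} - {v}.
      if vt (iv d) \<noteq> iv d then x (edge iv d) else root_value x n (iv d))"

definition dart_value :: "('d set \<Rightarrow> bit) \<Rightarrow> 'd \<Rightarrow> bit" where
  "dart_value x d = (if d \<in> info_darts then x (edge iv d)
     else if vt d = d then root_value x (Suc (h d)) d else root_value x (Suc (h (iv d))) (iv d))"

lemma root_value_stable:
  assumes "v \<in> D" "vt v = v" "h v < n"
  shows "root_value x n v = root_value x (Suc (h v)) v"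
  using assms
proof (induction "h v" arbitrary: v n rule: less_induct)
  case less
  obtain n' where n': "n = Suc n'" "h v \<le> n'"
    using less.prems(3) by (cases n) auto
  have "root_value x n' (iv d) = root_value x (h v) (iv d)"
    if "d \<in> D" "vt d = v" "d \<noteq> v" "vt (iv d) = iv d" for d
  proof -
    have lt: "h (iv d) < h v"
      using root_height that by auto
    have stable: "root_value x k (iv d) = root_value x (Suc (h (iv d))) (iv d)"
      if "h (iv d) < k" for k
      using less.hyps[OF lt iv_in[OF \<open>d \<in> D\<close>] \<open>vt (iv d) = iv d\<close> that] .
    then show ?thesis
      using stable[of n'] stable[of "h v"] lt n'(2) by simp
  qed
  then show ?case
    unfolding n'(1) root_value.simps by (intro sum.cong) auto
qed

lemma dart_value_root:
  assumes "v \<in> D" "vt v = v"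
  shows "dart_value x v = (\<Sum>d\<in>{d\<in>D. vt d = v} - {v}. dart_value x d)"
proof -
  have "dart_value x v = root_value x (Suc (h v)) v"
    using assms by (simp add: dart_value_def info_darts_def)
  also have "\<dots> = (\<Sum>d\<in>{d\<in>D. vt d = v} - {v}. dart_value x d)"
    unfolding root_value.simps
  proof (intro sum.cong refl)
    fix d assume "d \<in> {d\<in>D. vt d = v} - {v}"
    then have d: "d \<in> D" "vt d = v" "d \<noteq> v"
      by auto
    show "(if vt (iv d) \<noteq> iv d then x (edge iv d) else root_value x (h v) (iv d)) = dart_value x d"
    proof (cases "vt (iv d) = iv d")
      case True
      then have "root_value x (h v) (iv d) = root_value x (Suc (h (iv d))) (iv d)"
        using root_height d by (intro root_value_stable) (auto simp: iv_in)
      then show ?thesis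
        using True d by (auto simp: dart_value_def info_darts_def)
    qed (use d in \<open>auto simp: dart_value_def info_darts_def\<close>)
  qed
  finally show ?thesis .
qed

lemma dart_value_iv:
  assumes "d \<in> D"
  shows "dart_value x (iv d) = dart_value x d"
proof (cases "d \<in> info_darts")
  case True
  then have "iv d \<in> info_darts"
    using assms by (auto simp: info_darts_def iv_in iv_iv)
  then show ?thesis
    using True assms by (simp add: dart_value_def edge_iv)
next
  case False
  then have "iv d \<notin> info_darts"
    using assms by (auto simp: info_darts_def iv_in iv_iv)
  moreover have "vt d = d \<longleftrightarrow> vt (iv d) \<noteq> iv d" if "iv d \<noteq> d"
    using root_edge[OF assms] False that assms by (auto simp: info_darts_def)
  ultimately show ?thesis
    using False assms by (cases "iv d = d") (auto simp: dart_value_def iv_iv simp del: root_value.simps)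
qed

text \<open>Over bit, minus the sum of the other labels is their sum.\<close>

lemma dart_value_check:
  assumes "d \<in> D"
  shows "dart_value x d = (\<Sum>d'\<in>{d'\<in>D. vt d' = vt d} - {d}. dart_value x d')"
proof -
  let ?A = "{d'\<in>D. vt d' = vt d}"
  have fin: "finite ?A"
    using finite_darts by simp
  have "vt d \<in> ?A" "d \<in> ?A"
    using assms vt_in vt_vt by auto
  then have "(\<Sum>d'\<in>?A. dart_value x d') = dart_value x (vt d) + (\<Sum>d'\<in>?A - {vt d}. dart_value x d')"
    and "(\<Sum>d'\<in>?A. dart_value x d') = dart_value x d + (\<Sum>d'\<in>?A - {d}. dart_value x d')"
    using fin by (blast intro: sum.remove)+
  moreover have "dart_value x (vt d) = (\<Sum>d'\<in>?A - {vt d}. dart_value x d')"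
    using dart_value_root[of "vt d" x] assms vt_in vt_vt by simp
  ultimately show ?thesis
    by (simp add: add_eq_0_iff2)
qed

lemma root_value_linear:
  "root_value (\<lambda>e. a * x e + b * y e) n v = a * root_value x n v + b * root_value y n v"
proof (induction n arbitrary: v)
  case (Suc n)
  show ?case
    unfolding root_value.simps sum_distrib_left sum.distrib[symmetric]
    by (intro sum.cong) (simp_all add: Suc)
qed simp

lemma dart_value_linear:
  "dart_value (\<lambda>e. a * x e + b * y e) d = a * dart_value x d + b * dart_value y d"
  unfolding dart_value_def root_value_linear by simp

end

context code_graph
begin

lemma dart_value_edge:
  "a \<in> D \<Longrightarrow> b \<in> D \<Longrightarrow> edge iv a = edge iv b \<Longrightarrow> dart_value x a = dart_value x b"
  using edge_eq dart_value_iv by metis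

definition messages :: "('d set \<Rightarrow> bit) set" where
  "messages = {x. \<forall>e. e \<notin> edge iv ` info_darts \<longrightarrow> x e = 0}"

context
  fixes pos :: "'d set \<Rightarrow> nat"
  assumes pos: "bij_betw pos (edge iv ` D) {0..<card (edge iv ` D)}"
begin

definition codeword :: "('d set \<Rightarrow> bit) \<Rightarrow> nat \<Rightarrow> bit" where
  "codeword x i = (if i < card (edge iv ` D)
     then dart_value x (SOME d. d \<in> D \<and> pos (edge iv d) = i) else 0)"

lemma pos_edge_lt: "d \<in> D \<Longrightarrow> pos (edge iv d) < card (edge iv ` D)"
  using pos by (auto simp: bij_betw_def)

lemma pos_edge_eq: "a \<in> D \<Longrightarrow> b \<in> D \<Longrightarrow> pos (edge iv a) = pos (edge iv b) \<longleftrightarrow> edge iv a = edge iv b"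
  using pos by (auto simp: bij_betw_def inj_on_def)

lemma codeword_pos:
  assumes "d \<in> D"
  shows "codeword x (pos (edge iv d)) = dart_value x d"
proof -
  let ?d = "SOME d'. d' \<in> D \<and> pos (edge iv d') = pos (edge iv d)"
  have "?d \<in> D \<and> pos (edge iv ?d) = pos (edge iv d)"
    by (rule someI[of _ d]) (use assms in simp)
  then have "dart_value x ?d = dart_value x d"
    using assms pos_edge_eq dart_value_edge by blast
  then show ?thesis
    using assms pos_edge_lt by (simp add: codeword_def)
qed

lemma codeword_linear:
  "codeword (\<lambda>e. a * x e + b * y e) = (\<lambda>i. a * codeword x i + b * codeword y i)"
  by (simp add: fun_eq_iff codeword_def dart_value_linear)

lemma linear_code_codewords: "linear_code (card (edge iv ` D)) (codeword ` messages)"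
  unfolding linear_code_def
proof (intro conjI ballI allI)
  have scale: "codeword (\<lambda>e. a * x e) = (\<lambda>i. a * codeword x i)" for a x
    using codeword_linear[of a x 0 x] by simp
  have zero: "codeword (\<lambda>e. 0) = (\<lambda>i. 0)"
    using scale[of 0 "\<lambda>e. 0"] by simp
  show "codeword ` messages \<subseteq> words (card (edge iv ` D))"
    by (auto simp: words_def codeword_def)
  show "(\<lambda>_. 0) \<in> codeword ` messages"
    by (rule image_eqI[of _ _ "\<lambda>e. 0"]) (simp_all add: zero messages_def)
  fix c d assume "c \<in> codeword ` messages" "d \<in> codeword ` messages"
  then obtain x y where "x \<in> messages" "y \<in> messages" "c = codeword x" "d = codeword y"
    by auto
  then show "(\<lambda>i. c i + d i) \<in> codeword ` messages"
    using codeword_linear[of 1 x 1 y]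
    by (intro image_eqI[of _ _ "\<lambda>e. x e + y e"]) (auto simp: messages_def)
next
  fix a :: bit and c assume "c \<in> codeword ` messages"
  then obtain x where "x \<in> messages" "c = codeword x"
    by auto
  then show "(\<lambda>i. a * c i) \<in> codeword ` messages"
    using codeword_linear[of a x 0 x]
    by (intro image_eqI[of _ _ "\<lambda>e. a * x e"]) (auto simp: messages_def)
qed

lemma card_codewords:
  "card (codeword ` messages) = card (UNIV :: bit set) ^ card (edge iv ` info_darts)"
proof -
  have "inj_on codeword messages"
  proof (rule inj_onI)
    fix x y assume xy: "x \<in> messages" "y \<in> messages" "codeword x = codeword y"
    show "x = y"
    proof
      fix e
      show "x e = y e"
      proof (cases "e \<in> edge iv ` info_darts")
        case True
        then obtain d where "d \<in> info_darts" "e = edge iv d"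
          by auto
        then show ?thesis
          using codeword_pos[of d x] codeword_pos[of d y] xy(3)
          by (simp add: dart_value_def info_darts_def)
      qed (use xy in \<open>simp add: messages_def\<close>)
    qed
  qed
  moreover have "finite (edge iv ` info_darts)"
    using finite_darts by (simp add: info_darts_def)
  ultimately show ?thesis
    by (simp add: card_image messages_def card_vanishing_outside)
qed

text \<open>Otherwise every erased dart shares its vertex with another erased dart, and the erased
  darts contradict stopping_set_large.\<close>

lemma lonely_erased_dart:
  assumes girth: "girth_gt (Suc m) D iv vt"
    and E: "E \<subseteq> {0..<card (edge iv ` D)}" "E \<noteq> {}" "card E \<le> Suc m"
  obtains d where "d \<in> D" "pos (edge iv d) \<in> E"
    "\<And>d'. d' \<in> D \<Longrightarrow> vt d' = vt d \<Longrightarrow> d' \<noteq> d \<Longrightarrow> pos (edge iv d') \<notin> E"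
proof -
  define F where "F = {d\<in>D. pos (edge iv d) \<in> E}"
  have pos_F: "pos ` edge iv ` F = E"
  proof
    show "E \<subseteq> pos ` edge iv ` F"
    proof
      fix i assume "i \<in> E"
      then have "i \<in> pos ` edge iv ` D"
        using E(1) pos by (auto simp: bij_betw_def)
      then show "i \<in> pos ` edge iv ` F"
        using \<open>i \<in> E\<close> by (auto simp: F_def)
    qed
  qed (auto simp: F_def)
  moreover have "inj_on pos (edge iv ` F)"
    using bij_betw_imp_inj_on[OF pos] by (rule inj_on_subset) (auto simp: F_def)
  ultimately have "card (edge iv ` F) \<le> Suc m"
    using E(3) card_image by metis
  have F: "F \<subseteq> D" "F \<noteq> {}" "\<And>d. d \<in> F \<Longrightarrow> iv d \<in> F"
    using pos_F E(2) by (auto simp: F_def iv_in edge_iv)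
  have "\<exists>d\<in>F. \<forall>d'\<in>F. vt d' = vt d \<longrightarrow> d' = d"
  proof (rule ccontr)
    assume "\<not> ?thesis"
    then have "Suc m < card (edge iv ` F)"
      using stopping_set_large[OF semi_root girth _ F] semi_dist by auto
    then show False
      using \<open>card (edge iv ` F) \<le> Suc m\<close> by simp
  qed
  then show thesis
    using that by (auto simp: F_def)
qed

lemma codeword_repair:
  assumes girth: "girth_gt (Suc m) D iv vt"
    and E: "E \<subseteq> {0..<card (edge iv ` D)}" "E \<noteq> {}" "card E \<le> Suc m"
  shows "\<exists>i\<in>E. \<exists>R c. R \<subseteq> {0..<card (edge iv ` D)} \<and> card R \<le> r \<and> R \<inter> E = {} \<and>
           (\<forall>w\<in>codeword ` messages. w i = (\<Sum>j\<in>R. c j * w j))"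
proof -
  obtain d where "d \<in> D" "pos (edge iv d) \<in> E"
    and alone: "\<And>d'. d' \<in> D \<Longrightarrow> vt d' = vt d \<Longrightarrow> d' \<noteq> d \<Longrightarrow> pos (edge iv d') \<notin> E"
    using lonely_erased_dart[OF girth E] by blast
  define A where "A = {d'\<in>D. vt d' = vt d} - {d}"
  have inj: "inj_on (\<lambda>d'. pos (edge iv d')) A"
  proof (rule inj_onI)
    fix a b assume "a \<in> A" "b \<in> A" "pos (edge iv a) = pos (edge iv b)"
    then have "b = a \<or> b = iv a" "vt b = vt a" "a \<in> D"
      using pos_edge_eq edge_eq by (auto simp: A_def)
    then show "a = b"
      using no_loop[OF girth, of a] by (metis zero_less_Suc)
  qed
  show ?thesis
  proof (intro bexI[of _ "pos (edge iv d)"] exI[of _ "(\<lambda>d'. pos (edge iv d')) ` A"]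
      exI[of _ "\<lambda>_. 1"] conjI ballI)
    show "pos (edge iv d) \<in> E"
      by fact
    show "(\<lambda>d'. pos (edge iv d')) ` A \<subseteq> {0..<card (edge iv ` D)}"
      using pos_edge_lt by (auto simp: A_def)
    show "card ((\<lambda>d'. pos (edge iv d')) ` A) \<le> r"
      using card_image[OF inj] degree[OF \<open>d \<in> D\<close>] \<open>d \<in> D\<close> finite_darts
      by (simp add: A_def card_Diff_singleton)
    show "(\<lambda>d'. pos (edge iv d')) ` A \<inter> E = {}"
      using alone by (auto simp: A_def)
    fix w assume "w \<in> codeword ` messages"
    then obtain x where w: "w = codeword x"
      by auto
    have "w (pos (edge iv d)) = (\<Sum>d'\<in>A. dart_value x d')"
      using dart_value_check[OF \<open>d \<in> D\<close>] codeword_pos[OF \<open>d \<in> D\<close>] w by (simp add: A_def)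
    also have "\<dots> = (\<Sum>d'\<in>A. w (pos (edge iv d')))"
      using codeword_pos w by (intro sum.cong) (auto simp: A_def)
    also have "\<dots> = (\<Sum>j\<in>(\<lambda>d'. pos (edge iv d')) ` A. 1 * w j)"
      by (simp add: sum.reindex[OF inj])
    finally show "w (pos (edge iv d)) = (\<Sum>j\<in>(\<lambda>d'. pos (edge iv d')) ` A. 1 * w j)" .
  qed
qed

end

theorem seq_LRC_graph_code:
  assumes "girth_gt (Suc m) D iv vt"
  shows "\<exists>C :: (nat \<Rightarrow> bit) set.
           seq_LRC (card (edge iv ` D)) (card (edge iv ` info_darts)) r (Suc m) C"
proof -
  obtain pos where pos: "bij_betw pos (edge iv ` D) {0..<card (edge iv ` D)}"
    using ex_bij_betw_finite_nat finite_darts by blast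
  have "seq_LRC (card (edge iv ` D)) (card (edge iv ` info_darts)) r (Suc m) (codeword pos ` messages)"
    by (rule seq_LRC_if_repairable)
      (use pos linear_code_codewords card_codewords codeword_repair[OF pos assms] in
        \<open>auto simp: nk_code_def\<close>)
  then show ?thesis ..
qed

end

context dart_graph
begin

lemma card_proper_darts: "card {d\<in>D. iv d \<noteq> d} = 2 * card (edge iv ` {d\<in>D. iv d \<noteq> d})"
proof -
  let ?P = "{d\<in>D. iv d \<noteq> d}"
  have "?P = \<Union>(edge iv ` ?P)"
    using iv_in iv_iv by (auto simp: edge_def)
  moreover have "pairwise disjnt (edge iv ` ?P)"
    using edge_disjoint by (fastforce simp: pairwise_def disjnt_def)
  then have "card (\<Union>(edge iv ` ?P)) = (\<Sum>e\<in>edge iv ` ?P. card e)"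
    by (intro card_Union_disjoint) (auto simp: edge_def)
  moreover have "(\<Sum>e\<in>edge iv ` ?P. card e) = (\<Sum>e\<in>edge iv ` ?P. 2)"
    by (intro sum.cong) (auto simp: edge_def)
  ultimately show ?thesis
    by simp
qed

lemma card_edges: "2 * card (edge iv ` D) = card D + card {d\<in>D. iv d = d}"
proof -
  let ?S = "{d\<in>D. iv d = d}" and ?P = "{d\<in>D. iv d \<noteq> d}"
  have fin: "finite ?S" "finite ?P"
    using finite_darts by simp_all
  have "card D = card (?S \<union> ?P)"
    by (rule arg_cong[where f = card]) auto
  also have "\<dots> = card ?S + card ?P"
    using fin by (intro card_Un_disjoint) auto
  finally have "card D = card ?S + card ?P" .
  moreover have "edge iv ` D = edge iv ` ?S \<union> edge iv ` ?P"
    by auto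
  moreover have "edge iv ` ?S \<inter> edge iv ` ?P = {}"
    using edge_eq by fastforce
  then have "card (edge iv ` ?S \<union> edge iv ` ?P) = card (edge iv ` ?S) + card (edge iv ` ?P)"
    using fin by (simp add: card_Un_disjoint)
  moreover have "card (edge iv ` ?S) = card ?S"
    using edge_eq by (intro card_image inj_onI) auto
  ultimately show ?thesis
    using card_proper_darts by simp
qed

end

context code_graph
begin

lemma card_darts: "card D = Suc r * card (vt ` D)"
proof -
  have "card D = card (\<Union>v\<in>vt ` D. {d\<in>D. vt d = v})"
    by (intro arg_cong[where f = card]) auto
  also have "\<dots> = (\<Sum>v\<in>vt ` D. card {d\<in>D. vt d = v})"
    using finite_darts by (intro card_UN_disjoint) auto
  also have "\<dots> = (\<Sum>v\<in>vt ` D. Suc r)"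
    using degree by (intro sum.cong) auto
  finally show ?thesis
    by simp
qed

text \<open>The non-information edges are exactly the root edges, one per vertex.\<close>

lemma card_info_edges: "card (edge iv ` info_darts) + card (vt ` D) = card (edge iv ` D)"
proof -
  have "edge iv ` D = edge iv ` info_darts \<union> edge iv ` vt ` D"
  proof (intro equalityI subsetI)
    fix e assume "e \<in> edge iv ` D"
    then obtain d where d: "d \<in> D" "e = edge iv d"
      by auto
    then consider "d \<in> info_darts" | "vt d = d" | "vt (iv d) = iv d"
      by (auto simp: info_darts_def)
    then show "e \<in> edge iv ` info_darts \<union> edge iv ` vt ` D"
      using d iv_in edge_iv by cases (metis UnI1 UnI2 image_eqI)+
  qed (use vt_in in \<open>auto simp: info_darts_def\<close>)
  moreover have "edge iv ` info_darts \<inter> edge iv ` vt ` D = {}"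
  proof (rule ccontr)
    assume "edge iv ` info_darts \<inter> edge iv ` vt ` D \<noteq> {}"
    then obtain a b where ab: "a \<in> info_darts" "b \<in> D" "edge iv a = edge iv (vt b)"
      by auto
    then have "vt b = a \<or> vt b = iv a"
      using edge_eq[OF _ vt_in[OF ab(2)]] by (auto simp: info_darts_def)
    then show False
      using ab vt_vt[OF ab(2)] iv_iv by (auto simp: info_darts_def)
  qed
  moreover have "inj_on (edge iv) (vt ` D)"
  proof (rule inj_onI)
    fix a b assume "a \<in> vt ` D" "b \<in> vt ` D" "edge iv a = edge iv b"
    moreover from this have "a \<in> D" "b \<in> D" "vt a = a" "vt b = b"
      using vt_in vt_vt by auto
    ultimately show "a = b"
      using edge_eq root_edge by metis
  qed
  moreover have "finite info_darts"
    using finite_darts by (simp add: info_darts_def)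
  ultimately show ?thesis
    using finite_darts by (simp add: card_Un_disjoint card_image)
qed

end

section \<open>Girth-raising covers\<close>

text \<open>The cover is the voltage cover for the group of subsets of D under symmetric difference
  in which each proper edge is its own generator: the dart d at voltage A leads to iv d at
  voltage A \<triangle> {d, iv d}. A closed walk of the cover projects to a closed walk using every edge
  an even number of times, which a shortest cycle of the base cannot do; hence the girth grows. The darts
  (d, A) are encoded as natural numbers, so that covers can be iterated within one type.\<close>

definition lift :: "'d::countable \<Rightarrow> 'd set \<Rightarrow> nat" where
  "lift d A = prod_encode (to_nat d, set_encode (to_nat ` A))"

definition lift_base :: "nat \<Rightarrow> 'd::countable" where
  "lift_base n = from_nat (fst (prod_decode n))"

definition lift_voltage :: "nat \<Rightarrow> 'd::countable set" where
  "lift_voltage n = from_nat ` set_decode (snd (prod_decode n))"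

lemma base_lift [simp]: "lift_base (lift d A) = d"
  unfolding lift_base_def lift_def by simp

lemma voltage_lift [simp]: "finite A \<Longrightarrow> lift_voltage (lift d A) = A"
  unfolding lift_voltage_def lift_def by (simp add: image_image)

lemma lift_eq_iff:
  fixes d e :: "'d::countable"
  assumes "finite A" "finite B"
  shows "lift d A = lift e B \<longleftrightarrow> d = e \<and> A = B"
proof
  assume "lift d A = lift e B"
  then have "(lift_base (lift d A) :: 'd) = lift_base (lift e B)"
    "(lift_voltage (lift d A) :: 'd set) = lift_voltage (lift e B)"
    by simp_all
  then show "d = e \<and> A = B"
    using assms by simp
qed simp

locale voltage_cover = code_graph D iv vt h r m
  for D :: "'d::countable set" and iv vt h r m +
  fixes g :: nat
  assumes girth: "girth_gt g D iv vt"
begin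

abbreviation base :: "nat \<Rightarrow> 'd" where "base \<equiv> lift_base"
abbreviation voltage :: "nat \<Rightarrow> 'd set" where "voltage \<equiv> lift_voltage"

definition flip :: "'d \<Rightarrow> 'd set" where
  "flip d = (if iv d = d then {} else edge iv d)"

definition cover_darts :: "nat set" where
  "cover_darts = (\<lambda>(d, A). lift d A) ` (D \<times> Pow D)"

definition cover_iv :: "nat \<Rightarrow> nat" where
  "cover_iv n = lift (iv (base n)) (sym_diff (voltage n) (flip (base n)))"

definition cover_vt :: "nat \<Rightarrow> nat" where
  "cover_vt n = lift (vt (base n)) (voltage n)"

definition cover_h :: "nat \<Rightarrow> nat" where
  "cover_h n = h (base n)"

lemma finite_sub_darts: "A \<subseteq> D \<Longrightarrow> finite A"
  using finite_darts finite_subset by blast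

lemma lift_in_cover_darts:
  assumes "A \<subseteq> D \<or> finite A"
  shows "lift d A \<in> cover_darts \<longleftrightarrow> d \<in> D \<and> A \<subseteq> D"
proof
  assume "lift d A \<in> cover_darts"
  then obtain d' A' where "d' \<in> D" "A' \<subseteq> D" "lift d A = lift d' A'"
    unfolding cover_darts_def by auto
  then show "d \<in> D \<and> A \<subseteq> D"
    using lift_eq_iff[of A A' d d'] finite_sub_darts assms by auto
qed (auto simp: cover_darts_def)

lemma cover_dart_lift: "n \<in> cover_darts \<Longrightarrow> n = lift (base n) (voltage n)"
  and base_in: "n \<in> cover_darts \<Longrightarrow> base n \<in> D"
  and voltage_subset: "n \<in> cover_darts \<Longrightarrow> voltage n \<subseteq> D"
  and finite_voltage: "n \<in> cover_darts \<Longrightarrow> finite (voltage n)"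
  unfolding cover_darts_def using finite_sub_darts by auto

lemma flip_subset: "d \<in> D \<Longrightarrow> flip d \<subseteq> D"
  unfolding flip_def edge_def using iv_in by auto

lemma flip_iv: "d \<in> D \<Longrightarrow> flip (iv d) = flip d"
  unfolding flip_def edge_def using iv_iv by auto

lemma base_cover_iv [simp]: "base (cover_iv n) = iv (base n)"
  unfolding cover_iv_def by simp

lemma voltage_cover_iv [simp]:
  "n \<in> cover_darts \<Longrightarrow> voltage (cover_iv n) = sym_diff (voltage n) (flip (base n))"
  unfolding cover_iv_def using finite_voltage[of n] by (simp add: flip_def edge_def)

lemma base_cover_vt [simp]: "base (cover_vt n) = vt (base n)"
  unfolding cover_vt_def by simp

lemma voltage_cover_vt [simp]: "n \<in> cover_darts \<Longrightarrow> voltage (cover_vt n) = voltage n"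
  unfolding cover_vt_def using finite_voltage by simp

lemma cover_iv_in: "n \<in> cover_darts \<Longrightarrow> cover_iv n \<in> cover_darts"
  unfolding cover_iv_def using base_in[of n] voltage_subset[of n] flip_subset[of "base n"] iv_in
  by (subst lift_in_cover_darts) (auto intro: finite_sub_darts)

lemma cover_vt_in: "n \<in> cover_darts \<Longrightarrow> cover_vt n \<in> cover_darts"
  unfolding cover_vt_def using base_in voltage_subset vt_in by (subst lift_in_cover_darts) auto

lemma cover_dart_eq_iff:
  "n \<in> cover_darts \<Longrightarrow> n' \<in> cover_darts \<Longrightarrow> n = n' \<longleftrightarrow> base n = base n' \<and> voltage n = voltage n'"
proof
  assume "n \<in> cover_darts" "n' \<in> cover_darts" "base n = base n' \<and> voltage n = voltage n'"
  then show "n = n'"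
    using cover_dart_lift by metis
qed simp

lemma cover_iv_iv:
  assumes "n \<in> cover_darts"
  shows "cover_iv (cover_iv n) = n"
proof (subst cover_dart_eq_iff[OF cover_iv_in[OF cover_iv_in[OF assms]] assms], intro conjI)
  show "base (cover_iv (cover_iv n)) = base n"
    using iv_iv[OF base_in[OF assms]] by simp
  show "voltage (cover_iv (cover_iv n)) = voltage n"
    using assms cover_iv_in[OF assms] flip_iv[OF base_in[OF assms]] by auto
qed

lemma dart_graph_cover: "dart_graph cover_darts cover_iv cover_vt"
proof
  show "finite cover_darts"
    unfolding cover_darts_def using finite_darts by simp
  fix n assume n: "n \<in> cover_darts"
  show "cover_iv n \<in> cover_darts" "cover_iv (cover_iv n) = n" "cover_vt n \<in> cover_darts"
    using cover_iv_in[OF n] cover_iv_iv[OF n] cover_vt_in[OF n] .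
  show "cover_vt (cover_vt n) = cover_vt n"
    using cover_dart_eq_iff[OF cover_vt_in[OF cover_vt_in[OF n]] cover_vt_in[OF n]] n cover_vt_in[OF n]
      vt_vt[OF base_in[OF n]] by simp
qed

lemma cover_iv_fixed_iff: "n \<in> cover_darts \<Longrightarrow> cover_iv n = n \<longleftrightarrow> iv (base n) = base n"
  using cover_dart_eq_iff[OF cover_iv_in] by (auto simp: flip_def)

lemma cover_vt_fixed_iff: "n \<in> cover_darts \<Longrightarrow> cover_vt n = n \<longleftrightarrow> vt (base n) = base n"
  using cover_dart_eq_iff[OF cover_vt_in] by auto

lemma cover_semi_root: "n \<in> cover_darts \<Longrightarrow> cover_iv n = n \<Longrightarrow> cover_vt n = n"
  using cover_iv_fixed_iff cover_vt_fixed_iff semi_root base_in by blast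

text \<open>The darts at a vertex of the cover are the lifts, at the same voltage, of the darts at
  the vertex below it.\<close>

lemma cover_degree:
  assumes n: "n \<in> cover_darts"
  shows "card {n'\<in>cover_darts. cover_vt n' = cover_vt n} = Suc r"
proof -
  let ?A = "{d\<in>D. vt d = vt (base n)}"
  have "{n'\<in>cover_darts. cover_vt n' = cover_vt n} \<subseteq> (\<lambda>d. lift d (voltage n)) ` ?A"
  proof
    fix n' assume "n' \<in> {n'\<in>cover_darts. cover_vt n' = cover_vt n}"
    then have n': "n' \<in> cover_darts" "cover_vt n' = cover_vt n"
      by auto
    then have "base (cover_vt n') = base (cover_vt n)" "voltage (cover_vt n') = voltage (cover_vt n)"
      by simp_all
    then have "vt (base n') = vt (base n)" "voltage n' = voltage n"
      using n n'(1) by simp_all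
    moreover have "n' = lift (base n') (voltage n')"
      using cover_dart_lift[OF n'(1)] .
    ultimately show "n' \<in> (\<lambda>d. lift d (voltage n)) ` ?A"
      using base_in[OF n'(1)] by auto
  qed
  moreover have "(\<lambda>d. lift d (voltage n)) ` ?A \<subseteq> {n'\<in>cover_darts. cover_vt n' = cover_vt n}"
  proof
    fix x assume "x \<in> (\<lambda>d. lift d (voltage n)) ` ?A"
    then obtain d where d: "d \<in> D" "vt d = vt (base n)" "x = lift d (voltage n)"
      by auto
    then have "x \<in> cover_darts" "cover_vt x = cover_vt n"
      using finite_voltage[OF n] voltage_subset[OF n] lift_in_cover_darts
      by (auto simp: cover_vt_def)
    then show "x \<in> {n'\<in>cover_darts. cover_vt n' = cover_vt n}"
      by simp
  qed
  moreover have "inj_on (\<lambda>d. lift d (voltage n)) ?A"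
    by (rule inj_onI) (use lift_eq_iff finite_voltage[OF n] in blast)
  ultimately have "card {n'\<in>cover_darts. cover_vt n' = cover_vt n} = card ((\<lambda>d. lift d (voltage n)) ` ?A)"
      "card ((\<lambda>d. lift d (voltage n)) ` ?A) = card ?A"
    by (simp_all add: subset_antisym card_image)
  then show ?thesis
    using degree base_in[OF n] by simp
qed

lemma cover_root_edge:
  assumes n: "n \<in> cover_darts" and a: "cover_vt n = n" "cover_vt (cover_iv n) = cover_iv n"
  shows "cover_iv n = n"
proof -
  have "vt (base n) = base n"
    using a cover_vt_fixed_iff[OF n] by simp
  moreover have "vt (iv (base n)) = iv (base n)"
    using a cover_vt_fixed_iff[OF cover_iv_in[OF n]] n by simp
  ultimately have "iv (base n) = base n"
    using root_edge base_in[OF n] by auto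
  then show ?thesis using cover_iv_fixed_iff[OF n] by simp
qed

lemma cover_root_height:
  assumes n: "n \<in> cover_darts" and a: "cover_vt n \<noteq> n" "cover_vt (cover_iv n) = cover_iv n"
  shows "cover_h (cover_iv n) < cover_h (cover_vt n)"
proof -
  have "vt (base n) \<noteq> base n"
    using a cover_vt_fixed_iff[OF n] by simp
  moreover have "vt (iv (base n)) = iv (base n)"
    using a cover_vt_fixed_iff[OF cover_iv_in[OF n]] n by simp
  ultimately have "h (iv (base n)) < h (vt (base n))"
    using root_height base_in[OF n] by auto
  then show ?thesis unfolding cover_h_def using n by simp
qed

lemma inj_on_lift: "inj_on (\<lambda>(d, A). lift d A) (X \<times> Pow D)"
  by (rule inj_onI) (auto simp: lift_eq_iff finite_sub_darts)

lemma card_cover_semi_edges: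
  "card {n\<in>cover_darts. cover_iv n = n} = 2 ^ card D * card {d\<in>D. iv d = d}"
proof -
  have semi_eq: "{n\<in>cover_darts. cover_iv n = n} = (\<lambda>(d, A). lift d A) ` ({d\<in>D. iv d = d} \<times> Pow D)"
  proof
    show "{n\<in>cover_darts. cover_iv n = n} \<subseteq> (\<lambda>(d, A). lift d A) ` ({d\<in>D. iv d = d} \<times> Pow D)"
    proof
      fix n assume "n \<in> {n\<in>cover_darts. cover_iv n = n}"
      then have n: "n \<in> cover_darts" "cover_iv n = n" by auto
      have "iv (base n) = base n"
        using cover_iv_fixed_iff[OF n(1)] n(2) by simp
      then show "n \<in> (\<lambda>(d, A). lift d A) ` ({d\<in>D. iv d = d} \<times> Pow D)"
        using cover_dart_lift[OF n(1)] base_in[OF n(1)] voltage_subset[OF n(1)]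
        by (intro image_eqI[of _ _ "(base n, voltage n)"]) auto
    qed
    show "(\<lambda>(d, A). lift d A) ` ({d\<in>D. iv d = d} \<times> Pow D) \<subseteq> {n\<in>cover_darts. cover_iv n = n}"
    proof
      fix x assume "x \<in> (\<lambda>(d, A). lift d A) ` ({d\<in>D. iv d = d} \<times> Pow D)"
      then obtain d A where dA: "d \<in> D" "iv d = d" "A \<subseteq> D" "x = lift d A" by auto
      have xD: "x \<in> cover_darts"
        using dA lift_in_cover_darts by auto
      have "base x = d"
        using dA by simp
      then show "x \<in> {n\<in>cover_darts. cover_iv n = n}"
        using cover_iv_fixed_iff[OF xD] dA xD by simp
    qed
  qed
  show ?thesis
    unfolding semi_eq by (subst card_image[OF inj_on_lift]) (simp add: card_cartesian_product card_Pow finite_darts)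
qed

lemma card_cover_vertices: "card (cover_vt ` cover_darts) = 2 ^ card D * card (vt ` D)"
proof -
  have vertices_eq: "cover_vt ` cover_darts = (\<lambda>(d, A). lift d A) ` (vt ` D \<times> Pow D)"
  proof
    show "cover_vt ` cover_darts \<subseteq> (\<lambda>(d, A). lift d A) ` (vt ` D \<times> Pow D)"
    proof
      fix x assume "x \<in> cover_vt ` cover_darts"
      then obtain n where n: "n \<in> cover_darts" "x = cover_vt n" by auto
      then show "x \<in> (\<lambda>(d, A). lift d A) ` (vt ` D \<times> Pow D)"
        using base_in[OF n(1)] voltage_subset[OF n(1)] unfolding cover_vt_def
        by (intro image_eqI[of _ _ "(vt (base n), voltage n)"]) auto
    qed
    show "(\<lambda>(d, A). lift d A) ` (vt ` D \<times> Pow D) \<subseteq> cover_vt ` cover_darts"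
    proof
      fix x assume "x \<in> (\<lambda>(d, A). lift d A) ` (vt ` D \<times> Pow D)"
      then obtain d A where dA: "d \<in> D" "A \<subseteq> D" "x = lift (vt d) A" by auto
      have "lift d A \<in> cover_darts"
        using dA lift_in_cover_darts by auto
      moreover have "cover_vt (lift d A) = x"
        unfolding cover_vt_def using dA finite_sub_darts by simp
      ultimately show "x \<in> cover_vt ` cover_darts" by (metis image_eqI)
    qed
  qed
  show ?thesis
    unfolding vertices_eq by (subst card_image[OF inj_on_lift]) (simp add: card_cartesian_product card_Pow finite_darts)
qed


lemma voltage_step:
  assumes "n \<in> cover_darts" "n' \<in> cover_darts" "cover_vt (cover_iv n) = cover_vt n'"
  shows "voltage n' = sym_diff (voltage n) (flip (base n))"
proof -
  have "voltage (cover_vt (cover_iv n)) = voltage (cover_vt n')"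
    using assms(3) by simp
  then show ?thesis
    using assms(1,2) cover_iv_in[OF assms(1)] by simp
qed

lemma base_step: "cover_vt (cover_iv n) = cover_vt n' \<Longrightarrow> vt (iv (base n)) = vt (base n')"
  using base_cover_vt[of "cover_iv n"] base_cover_vt[of n'] by simp

lemma base_step_nb:
  assumes "n \<in> cover_darts" "n' \<in> cover_darts" "cover_vt (cover_iv n) = cover_vt n'" "n' \<noteq> cover_iv n"
  shows "base n' \<noteq> iv (base n)"
proof
  assume "base n' = iv (base n)"
  moreover have "voltage n' = voltage (cover_iv n)"
    using voltage_step[OF assms(1-3)] assms(1) by simp
  ultimately have "n' = cover_iv n"
    using cover_dart_eq_iff[OF assms(2) cover_iv_in[OF assms(1)]] by simp
  then show False
    using assms(4) by simp
qed

lemma nb_walk_project: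
  assumes walk: "nb_walk cover_darts cover_iv cover_vt ws"
  shows "nb_walk D iv vt (map base ws)"
  unfolding nb_walk_def
proof (intro conjI allI impI ballI subsetI)
  fix x assume "x \<in> set (map base ws)"
  then obtain n where n: "n \<in> set ws" "x = base n"
    by auto
  then have "n \<in> cover_darts" "cover_iv n \<noteq> n"
    using walk unfolding nb_walk_def by auto
  then show "x \<in> D" "iv x \<noteq> x"
    using base_in cover_iv_fixed_iff n(2) by auto
next
  fix i assume i: "Suc i < length (map base ws)"
  then have "ws ! i \<in> cover_darts" "ws ! Suc i \<in> cover_darts"
    "cover_vt (cover_iv (ws ! i)) = cover_vt (ws ! Suc i)" "ws ! Suc i \<noteq> cover_iv (ws ! i)"
    using walk nth_mem[of i ws] nth_mem[of "Suc i" ws] unfolding nb_walk_def by auto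
  then show "vt (iv (map base ws ! i)) = vt (map base ws ! Suc i)"
    and "map base ws ! Suc i \<noteq> iv (map base ws ! i)"
    using base_step base_step_nb i by auto
qed

lemma closed_nb_walk_project:
  assumes walk: "nb_walk cover_darts cover_iv cover_vt ws"
    and closed: "closed_nb_walk cover_iv cover_vt ws"
  shows "closed_nb_walk iv vt (map base ws)"
proof -
  have ne: "ws \<noteq> []" and "cover_vt (cover_iv (last ws)) = cover_vt (hd ws)"
    "hd ws \<noteq> cover_iv (last ws)"
    using closed unfolding closed_nb_walk_def by auto
  moreover have "last ws \<in> cover_darts" "hd ws \<in> cover_darts"
    using walk ne unfolding nb_walk_def by auto
  ultimately show ?thesis
    unfolding closed_nb_walk_def using base_step base_step_nb by (simp add: hd_map last_map)
qed

lemma cover_semi_dist: "semi_dist_ge m cover_darts cover_iv cover_vt"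
  unfolding semi_dist_ge_def
proof (intro allI impI)
  fix ws assume a: "nb_walk cover_darts cover_iv cover_vt ws \<and> ws \<noteq> [] \<and> cover_iv (cover_vt (hd ws)) = cover_vt (hd ws)
      \<and> cover_iv (cover_vt (cover_iv (last ws))) = cover_vt (cover_iv (last ws))"
  have lD: "last ws \<in> cover_darts" "hd ws \<in> cover_darts"
    using a unfolding nb_walk_def by auto
  have s1: "iv (vt (base (hd ws))) = vt (base (hd ws))"
    using cover_iv_fixed_iff[OF cover_vt_in[OF lD(2)]] a by simp
  have s2: "iv (vt (iv (base (last ws)))) = vt (iv (base (last ws)))"
    using cover_iv_fixed_iff[OF cover_vt_in[OF cover_iv_in[OF lD(1)]]] a lD by simp
  have "nb_walk D iv vt (map base ws)"
    using nb_walk_project a by blast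
  then show "m \<le> length ws"
    using semi_dist unfolding semi_dist_ge_def
    using a s1 s2 by (auto simp: hd_map last_map)
qed

lemma voltage_along_walk:
  assumes walk: "nb_walk cover_darts cover_iv cover_vt ws"
    and distinct: "\<And>i j. i < j \<Longrightarrow> j < length ws \<Longrightarrow> edge iv (base (ws ! i)) \<noteq> edge iv (base (ws ! j))"
  shows "k < length ws \<Longrightarrow>
    voltage (cover_iv (ws ! k)) = sym_diff (voltage (ws ! 0)) (\<Union>i\<le>k. edge iv (base (ws ! i)))"
proof (induction k)
  have in_cover: "ws ! k \<in> cover_darts" "cover_iv (ws ! k) \<noteq> ws ! k" if "k < length ws" for k
    using walk that nth_mem[OF that] unfolding nb_walk_def by auto
  have flip_edge: "flip (base (ws ! k)) = edge iv (base (ws ! k))" if "k < length ws" for k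
    using in_cover[OF that] cover_iv_fixed_iff by (simp add: flip_def)
  {
    case 0
    then show ?case
      using in_cover flip_edge by simp
  next
    case (Suc k)
    have "cover_vt (cover_iv (ws ! k)) = cover_vt (ws ! Suc k)"
      using walk Suc.prems unfolding nb_walk_def by simp
    then have "voltage (ws ! Suc k) = voltage (cover_iv (ws ! k))"
      using voltage_cover_vt cover_iv_in in_cover Suc.prems by (metis Suc_lessD)
    also have "\<dots> = sym_diff (voltage (ws ! 0)) (\<Union>i\<le>k. edge iv (base (ws ! i)))"
      using Suc by simp
    finally have "voltage (cover_iv (ws ! Suc k)) =
        sym_diff (sym_diff (voltage (ws ! 0)) (\<Union>i\<le>k. edge iv (base (ws ! i)))) (edge iv (base (ws ! Suc k)))"
      using in_cover[OF Suc.prems] flip_edge[OF Suc.prems] by simp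
    moreover have "edge iv (base (ws ! i)) \<inter> edge iv (base (ws ! Suc k)) = {}" if "i \<le> k" for i
      using distinct[of i "Suc k"] that Suc.prems edge_disjoint base_in in_cover by simp
    then have "(\<Union>i\<le>k. edge iv (base (ws ! i))) \<inter> edge iv (base (ws ! Suc k)) = {}"
      by blast
    ultimately show ?case
      unfolding atMost_Suc UN_insert by blast
  }
qed

lemma cover_girth: "girth_gt (Suc g) cover_darts cover_iv cover_vt"
  unfolding girth_gt_def
proof (intro allI impI)
  fix ws assume "nb_walk cover_darts cover_iv cover_vt ws \<and> closed_nb_walk cover_iv cover_vt ws"
  then have walk: "nb_walk cover_darts cover_iv cover_vt ws" and closed: "closed_nb_walk cover_iv cover_vt ws"
    by auto
  have proj: "nb_walk D iv vt (map base ws)" "closed_nb_walk iv vt (map base ws)"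
    using nb_walk_project[OF walk] closed_nb_walk_project[OF walk closed] .
  then have "g < length (map base ws)"
    using girth unfolding girth_gt_def by blast
  then have "g < length ws"
    by simp
  moreover have "length ws \<noteq> Suc g"
  proof
    assume L: "length ws = Suc g"
    have distinct: "edge iv (base (ws ! i)) \<noteq> edge iv (base (ws ! j))"
      if "i < j" "j < length ws" for i j
    proof
      assume "edge iv (base (ws ! i)) = edge iv (base (ws ! j))"
      then have "\<exists>ps. nb_walk D iv vt ps \<and> closed_nb_walk iv vt ps \<and> length ps < length (map base ws)"
        using closed_nb_walk_shorten[OF proj, of i j] that by simp
      then obtain ps where "nb_walk D iv vt ps" "closed_nb_walk iv vt ps" "length ps < length ws"
        by auto
      moreover from this(1,2) have "g < length ps"
        using girth unfolding girth_gt_def by blast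
      ultimately show False
        using L by simp
    qed
    have ne: "ws \<noteq> []" and close: "cover_vt (cover_iv (last ws)) = cover_vt (hd ws)"
      using closed by (auto simp: closed_nb_walk_def)
    then have "last ws \<in> cover_darts" "hd ws \<in> cover_darts"
      using walk by (auto simp: nb_walk_def)
    then have "voltage (ws ! 0) = voltage (cover_iv (ws ! (length ws - 1)))"
      using voltage_step[OF _ _ close] ne by (simp add: hd_conv_nth last_conv_nth)
    also have "\<dots> = sym_diff (voltage (ws ! 0)) (\<Union>i\<le>length ws - 1. edge iv (base (ws ! i)))"
      using voltage_along_walk[OF walk distinct] ne by simp
    finally have V: "voltage (ws ! 0) = sym_diff (voltage (ws ! 0)) (\<Union>i\<le>length ws - 1. edge iv (base (ws ! i)))" .
    have "base (ws ! 0) \<in> (\<Union>i\<le>length ws - 1. edge iv (base (ws ! i)))"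
      by (auto simp: edge_def)
    then show False
      using V by blast
  qed
  ultimately show "Suc g < length ws"
    by linarith
qed

lemma code_graph_cover: "code_graph cover_darts cover_iv cover_vt cover_h r m"
proof (rule code_graph.intro[OF dart_graph_cover], unfold_locales)
  fix n assume "n \<in> cover_darts"
  then show "cover_iv n = n \<Longrightarrow> cover_vt n = n"
    and "card {n'\<in>cover_darts. cover_vt n' = cover_vt n} = Suc r"
    and "cover_vt n = n \<Longrightarrow> cover_vt (cover_iv n) = cover_iv n \<Longrightarrow> cover_iv n = n"
    and "cover_vt n \<noteq> n \<Longrightarrow> cover_vt (cover_iv n) = cover_iv n \<Longrightarrow> cover_h (cover_iv n) < cover_h (cover_vt n)"
    using cover_semi_root cover_degree cover_root_edge cover_root_height by blast+
qed (rule cover_semi_dist)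

end

lemma code_graph_large_girth:
  fixes D :: "'d::countable set"
  assumes "code_graph D iv vt h r m"
  shows "\<exists>(D' :: nat set) iv' vt' h' N. code_graph D' iv' vt' h' r m \<and> girth_gt g D' iv' vt' \<and>
    0 < N \<and> card {d\<in>D'. iv' d = d} = N * card {d\<in>D. iv d = d} \<and> card (vt' ` D') = N * card (vt ` D)"
proof (induction g)
  case 0
  have "girth_gt 0 D iv vt"
    by (auto simp: girth_gt_def closed_nb_walk_def)
  then interpret voltage_cover D iv vt h r m 0
    using assms by (simp add: voltage_cover_def voltage_cover_axioms_def)
  have "girth_gt 0 cover_darts cover_iv cover_vt"
    by (auto simp: girth_gt_def closed_nb_walk_def)
  then show ?case
    using code_graph_cover card_cover_semi_edges card_cover_vertices
    by (rule_tac exI[of _ cover_darts], rule_tac exI[of _ cover_iv], rule_tac exI[of _ cover_vt],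
        rule_tac exI[of _ cover_h], rule_tac exI[of _ "2 ^ card D"]) simp
next
  case (Suc g)
  then obtain D' :: "nat set" and iv' vt' h' N where G: "code_graph D' iv' vt' h' r m"
    "girth_gt g D' iv' vt'" "0 < N" "card {d\<in>D'. iv' d = d} = N * card {d\<in>D. iv d = d}"
    "card (vt' ` D') = N * card (vt ` D)"
    by blast
  interpret voltage_cover D' iv' vt' h' r m g
    using G by (simp add: voltage_cover_def voltage_cover_axioms_def)
  have "card {n\<in>cover_darts. cover_iv n = n} = (2 ^ card D' * N) * card {d\<in>D. iv d = d}"
    "card (cover_vt ` cover_darts) = (2 ^ card D' * N) * card (vt ` D)"
    using card_cover_semi_edges card_cover_vertices G(4,5) by simp_all
  moreover have "0 < 2 ^ card D' * N"
    using G(3) by simp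
  ultimately show ?case
    using code_graph_cover cover_girth
    by (rule_tac exI[of _ cover_darts], rule_tac exI[of _ cover_iv], rule_tac exI[of _ cover_vt],
        rule_tac exI[of _ cover_h], rule_tac exI[of _ "2 ^ card D' * N"]) simp
qed

section \<open>Walks in trees\<close>

text \<open>A walk in a graph built from rooted trees, tracked by the depth of its vertices: proper
  edges rise at most one level, and once a walk starts descending it must keep descending until
  it reaches depth s, because the only way up at a vertex is the edge it arrived by.\<close>

locale depth_walk =
  fixes D :: "'d set" and iv vt :: "'d \<Rightarrow> 'd" and depth :: "'d \<Rightarrow> nat" and s :: nat
    and ws :: "'d list"
  assumes walk: "nb_walk D iv vt ws" and nonempty: "ws \<noteq> []"
    and iv_closed: "\<And>d. d \<in> D \<Longrightarrow> iv d \<in> D"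
    and depth_vt: "\<And>d. d \<in> D \<Longrightarrow> depth (vt d) = depth d"
    and rise_le: "\<And>d. d \<in> D \<Longrightarrow> iv d \<noteq> d \<Longrightarrow> depth d \<le> Suc (depth (iv d))"
    and keep_descending: "\<And>d d'. d \<in> D \<Longrightarrow> d' \<in> D \<Longrightarrow> iv d \<noteq> d \<Longrightarrow>
      depth (iv d) = Suc (depth d) \<Longrightarrow> depth (iv d) < s \<Longrightarrow> vt d' = vt (iv d) \<Longrightarrow> d' \<noteq> iv d \<Longrightarrow>
      depth (iv d') = Suc (depth d')"
    and leave_top: "\<And>d. d \<in> D \<Longrightarrow> iv d \<noteq> d \<Longrightarrow> depth d = 0 \<Longrightarrow> 0 < s \<Longrightarrow> depth (iv d) = 1"
    and starts_top: "depth (hd ws) = 0" and ends_top: "depth (iv (last ws)) = 0"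
begin

definition depth_after :: "nat \<Rightarrow> nat" where
  "depth_after i = (if i = 0 then depth (ws ! 0) else depth (iv (ws ! (i - 1))))"

lemma walk_in: "i < length ws \<Longrightarrow> ws ! i \<in> D \<and> iv (ws ! i) \<noteq> ws ! i"
  using walk nth_mem unfolding nb_walk_def by blast

lemma walk_step:
  "Suc i < length ws \<Longrightarrow> vt (iv (ws ! i)) = vt (ws ! Suc i) \<and> ws ! Suc i \<noteq> iv (ws ! i)"
  using walk unfolding nb_walk_def by blast

lemma depth_step: "Suc i < length ws \<Longrightarrow> depth (iv (ws ! i)) = depth (ws ! Suc i)"
  using depth_vt iv_closed walk_in walk_step by (metis Suc_lessD)

lemma depth_after_first: "depth (ws ! 0) = 0"
  using starts_top nonempty by (simp add: hd_conv_nth)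

lemma depth_after_last: "depth_after (length ws) = 0"
  using ends_top nonempty by (simp add: depth_after_def last_conv_nth)

lemma depth_after_le: "i \<le> length ws \<Longrightarrow> depth_after i + i \<le> length ws"
proof (induction "length ws - i" arbitrary: i)
  case 0
  then show ?case
    using depth_after_last by simp
next
  case (Suc k)
  then have "i < length ws" "k = length ws - Suc i"
    by simp_all
  then have "depth_after (Suc i) + Suc i \<le> length ws"
    using Suc.hyps(1)[of "Suc i"] by simp
  moreover have "depth_after i \<le> Suc (depth_after (Suc i))"
    using rise_le[OF conjunct1[OF walk_in] conjunct2[OF walk_in]] \<open>i < length ws\<close>
      depth_step[of "i - 1"] by (cases i) (auto simp: depth_after_def)
  ultimately show ?case
    by simp
qed

lemma descends:
  "i < length ws \<Longrightarrow> i < s \<Longrightarrow> depth (ws ! i) = i \<and> depth (iv (ws ! i)) = Suc i"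
proof (induction i)
  case 0
  then show ?case
    using depth_after_first leave_top walk_in by simp
next
  case (Suc i)
  then have "depth (ws ! i) = i" "depth (iv (ws ! i)) = Suc i"
    by simp_all
  moreover have "depth (ws ! Suc i) = Suc i"
    using depth_step[of i] Suc.prems calculation by simp
  ultimately show ?case
    using keep_descending[of "ws ! i" "ws ! Suc i"] walk_in walk_step Suc.prems
    by (metis Suc_lessD)
qed

lemma depth_reached: "s \<le> length ws"
proof (rule ccontr)
  assume "\<not> s \<le> length ws"
  then have "depth (iv (ws ! (length ws - 1))) = length ws"
    using descends[of "length ws - 1"] nonempty by simp
  then show False
    using depth_after_last nonempty by (simp add: depth_after_def)
qed

lemma length_ge: "2 * s \<le> length ws"
proof (cases s)
  case (Suc s')
  then have "depth_after s = s"
    using descends[of s'] depth_reached by (cases "s' < length ws") (auto simp: depth_after_def)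
  then show ?thesis
    using depth_after_le[OF depth_reached] by simp
qed simp

text \<open>If at depth s the walk can only move sideways, it spends one more step there.\<close>

lemma length_gt:
  assumes sideways: "\<And>d d'. d \<in> D \<Longrightarrow> d' \<in> D \<Longrightarrow> iv d \<noteq> d \<Longrightarrow> depth (iv d) = Suc (depth d) \<Longrightarrow>
      depth (iv d) = s \<Longrightarrow> vt d' = vt (iv d) \<Longrightarrow> d' \<noteq> iv d \<Longrightarrow> depth (iv d') = depth d'"
    and top_sideways: "\<And>d. d \<in> D \<Longrightarrow> iv d \<noteq> d \<Longrightarrow> depth d = 0 \<Longrightarrow> s = 0 \<Longrightarrow> depth (iv d) = 0"
  shows "Suc (2 * s) \<le> length ws"
proof -
  have "s < length ws"
  proof (cases s)
    case (Suc s')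
    show ?thesis
    proof (rule ccontr)
      assume "\<not> s < length ws"
      then have "depth (iv (ws ! (length ws - 1))) = length ws"
        using depth_reached descends[of "length ws - 1"] nonempty Suc by simp
      then show False
        using depth_after_last nonempty by (simp add: depth_after_def)
    qed
  qed (use nonempty in simp)
  moreover have "depth_after (Suc s) = s"
  proof (cases s)
    case 0
    then show ?thesis
      using top_sideways walk_in depth_after_first nonempty by (simp add: depth_after_def)
  next
    case (Suc s')
    then have "depth (ws ! s') = s'" "depth (iv (ws ! s')) = s" "depth (ws ! s) = s"
      using descends[of s'] depth_step[of s'] \<open>s < length ws\<close> by auto
    then show ?thesis
      using sideways[of "ws ! s'" "ws ! s"] walk_in walk_step Suc \<open>s < length ws\<close>
      by (auto simp: depth_after_def)
  qed
  ultimately show ?thesis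
    using depth_after_le[of "Suc s"] by simp
qed

end

section \<open>The base graphs\<close>

text \<open>Darts are triples (b, u, j): b selects a tree, the list u addresses a vertex of the r-ary
  tree of depth s, j = 0 is the root dart pointing towards the parent (a semi-edge at the top
  vertex) and j = c + 1 points to child c. In the twin graph the r child darts of two
  corresponding leaves are joined pairwise; in the bouquet graph r + 1 trees share their leaves.\<close>

definition tree_nodes :: "nat \<Rightarrow> nat \<Rightarrow> nat list set" where
  "tree_nodes r k = {u. set u \<subseteq> {0..<r} \<and> length u \<le> k}"

fun node_depth :: "'b \<times> nat list \<times> nat \<Rightarrow> nat" where
  "node_depth (b, u, j) = length u"

fun leaf_dist :: "nat \<Rightarrow> 'b \<times> nat list \<times> nat \<Rightarrow> nat" where
  "leaf_dist s (b, u, j) = s - length u"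

lemma finite_tree_nodes: "finite (tree_nodes r k)"
  unfolding tree_nodes_def using finite_lists_length_le[of "{0..<r}" k] by simp

lemma card_tree_nodes: "card (tree_nodes r k) = (\<Sum>i\<le>k. r ^ i)"
  unfolding tree_nodes_def using card_lists_length_le[of "{0..<r}" k] by simp

definition twin_darts :: "nat \<Rightarrow> nat \<Rightarrow> (bool \<times> nat list \<times> nat) set" where
  "twin_darts r s = {(b, u, j). u \<in> tree_nodes r s \<and> j \<le> r}"

fun twin_iv :: "nat \<Rightarrow> bool \<times> nat list \<times> nat \<Rightarrow> bool \<times> nat list \<times> nat" where
  "twin_iv s (b, [], 0) = (b, [], 0)"
| "twin_iv s (b, c # u, 0) = (b, u, Suc c)"
| "twin_iv s (b, u, Suc j) = (if length u < s then (b, j # u, 0) else (\<not> b, u, Suc j))"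

fun root_vt :: "'b \<times> nat list \<times> nat \<Rightarrow> 'b \<times> nat list \<times> nat" where
  "root_vt (b, u, j) = (b, u, 0)"

lemma twin_darts_iff: "(b, u, j) \<in> twin_darts r s \<longleftrightarrow> set u \<subseteq> {0..<r} \<and> length u \<le> s \<and> j \<le> r"
  by (simp add: twin_darts_def tree_nodes_def)

lemma twin_iv_fixed_iff: "twin_iv s d = d \<longleftrightarrow> (\<exists>b. d = (b, [], 0))"
  by (cases "(s, d)" rule: twin_iv.cases) auto

lemma twin_iv_in: "d \<in> twin_darts r s \<Longrightarrow> twin_iv s d \<in> twin_darts r s"
  by (cases "(s, d)" rule: twin_iv.cases) (auto simp: twin_darts_iff)

lemma twin_iv_iv: "d \<in> twin_darts r s \<Longrightarrow> twin_iv s (twin_iv s d) = d"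
  by (cases "(s, d)" rule: twin_iv.cases) (auto simp: twin_darts_iff)

lemma dart_graph_twin: "dart_graph (twin_darts r s) (twin_iv s) root_vt"
proof
  have "twin_darts r s \<subseteq> UNIV \<times> tree_nodes r s \<times> {0..r}"
    by (auto simp: twin_darts_def)
  then show "finite (twin_darts r s)"
    using finite_tree_nodes finite_subset by fastforce
  fix d assume "d \<in> twin_darts r s"
  then show "twin_iv s d \<in> twin_darts r s" "twin_iv s (twin_iv s d) = d"
    "root_vt d \<in> twin_darts r s" "root_vt (root_vt d) = root_vt d"
    by (simp_all add: twin_iv_in twin_iv_iv) (cases d; simp add: twin_darts_iff)+
qed

lemma twin_rise_le: "node_depth d \<le> Suc (node_depth (twin_iv s d))"
  and twin_leave_top: "twin_iv s d \<noteq> d \<Longrightarrow> node_depth d = 0 \<Longrightarrow>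
    node_depth (twin_iv s d) = (if 0 < s then 1 else 0)"
  by (cases "(s, d)" rule: twin_iv.cases; auto)+

lemma node_depth_root_vt: "node_depth (root_vt d) = node_depth d"
  by (cases d) simp

lemma twin_descend:
  assumes "d' \<in> twin_darts r s" "twin_iv s d \<noteq> d"
    and down: "node_depth (twin_iv s d) = Suc (node_depth d)"
    and "root_vt d' = root_vt (twin_iv s d)" "d' \<noteq> twin_iv s d"
  shows "node_depth (twin_iv s d') =
    (if node_depth (twin_iv s d) < s then Suc (node_depth d') else node_depth d')"
proof -
  obtain b u j where d: "d = (b, u, j)"
    by (cases d)
  have "\<exists>j0. twin_iv s d = (b, j0 # u, 0)"
    using down unfolding d by (cases "(s, (b, u, j))" rule: twin_iv.cases) (auto split: if_splits)
  then obtain j0 where d_iv: "twin_iv s d = (b, j0 # u, 0)"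
    by blast
  obtain j' where "d' = (b, j0 # u, j')" "j' \<noteq> 0"
    using assms(4,5) d_iv by (cases d') auto
  then show ?thesis
    using d_iv by (cases j') auto
qed

lemma semi_dist_twin: "semi_dist_ge (Suc (2 * s)) (twin_darts r s) (twin_iv s) root_vt"
  unfolding semi_dist_ge_def
proof (intro allI impI)
  fix ws assume ws: "nb_walk (twin_darts r s) (twin_iv s) root_vt ws \<and> ws \<noteq> [] \<and>
    twin_iv s (root_vt (hd ws)) = root_vt (hd ws) \<and>
    twin_iv s (root_vt (twin_iv s (last ws))) = root_vt (twin_iv s (last ws))"
  have top: "node_depth d = 0" if "twin_iv s (root_vt d) = root_vt d" for d
    using that twin_iv_fixed_iff[of s "root_vt d"] by (cases d) auto
  interpret depth_walk "twin_darts r s" "twin_iv s" root_vt node_depth s ws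
  proof
    show "nb_walk (twin_darts r s) (twin_iv s) root_vt ws" "ws \<noteq> []"
      "node_depth (hd ws) = 0" "node_depth (twin_iv s (last ws)) = 0"
      using ws top by auto
    fix d d' assume "d \<in> twin_darts r s"
    then show "twin_iv s d \<in> twin_darts r s" "node_depth (root_vt d) = node_depth d"
      "twin_iv s d \<noteq> d \<Longrightarrow> node_depth d \<le> Suc (node_depth (twin_iv s d))"
      "twin_iv s d \<noteq> d \<Longrightarrow> node_depth d = 0 \<Longrightarrow> 0 < s \<Longrightarrow> node_depth (twin_iv s d) = 1"
      by (simp_all add: twin_iv_in node_depth_root_vt twin_rise_le twin_leave_top)
    assume "d' \<in> twin_darts r s" "twin_iv s d \<noteq> d"
      "node_depth (twin_iv s d) = Suc (node_depth d)" "node_depth (twin_iv s d) < s"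
      "root_vt d' = root_vt (twin_iv s d)" "d' \<noteq> twin_iv s d"
    then show "node_depth (twin_iv s d') = Suc (node_depth d')"
      using twin_descend by presburger
  qed
  show "Suc (2 * s) \<le> length ws"
  proof (rule length_gt)
    fix d d' assume "d \<in> twin_darts r s" "d' \<in> twin_darts r s" "twin_iv s d \<noteq> d"
      "node_depth (twin_iv s d) = Suc (node_depth d)" "node_depth (twin_iv s d) = s"
      "root_vt d' = root_vt (twin_iv s d)" "d' \<noteq> twin_iv s d"
    then show "node_depth (twin_iv s d') = node_depth d'"
      using twin_descend by presburger
  qed (simp add: twin_leave_top)
qed

lemma code_graph_twin: "code_graph (twin_darts r s) (twin_iv s) root_vt (leaf_dist s) r (Suc (2 * s))"
proof (rule code_graph.intro[OF dart_graph_twin], unfold_locales)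
  fix d assume d: "d \<in> twin_darts r s"
  then obtain b u j where d_eq: "d = (b, u, j)"
    by (cases d)
  have "{d'\<in>twin_darts r s. root_vt d' = root_vt d} = (\<lambda>j. (b, u, j)) ` {0..r}"
    using d by (auto simp: d_eq twin_darts_iff)
  then show "card {d'\<in>twin_darts r s. root_vt d' = root_vt d} = Suc r"
    by (simp add: card_image inj_on_def)
  show "twin_iv s d = d \<Longrightarrow> root_vt d = d"
    using twin_iv_fixed_iff by auto
  show "root_vt d = d \<Longrightarrow> root_vt (twin_iv s d) = twin_iv s d \<Longrightarrow> twin_iv s d = d"
    and "root_vt d \<noteq> d \<Longrightarrow> root_vt (twin_iv s d) = twin_iv s d \<Longrightarrow>
      leaf_dist s (twin_iv s d) < leaf_dist s (root_vt d)"
    by (cases "(s, d)" rule: twin_iv.cases; auto split: if_splits)+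
qed (rule semi_dist_twin)

lemma card_twin_semi_edges: "card {d\<in>twin_darts r s. twin_iv s d = d} = 2"
proof -
  have "{d\<in>twin_darts r s. twin_iv s d = d} = {(True, [], 0), (False, [], 0)}"
    using twin_iv_fixed_iff by (auto simp: twin_darts_iff)
  then show ?thesis
    by simp
qed

lemma card_twin_vertices: "card (root_vt ` twin_darts r s) = 2 * (\<Sum>i\<le>s. r ^ i)"
proof -
  have "root_vt ` twin_darts r s = (\<lambda>(b, u). (b, u, 0)) ` (UNIV \<times> tree_nodes r s)"
    by (force simp: twin_darts_def)
  moreover have "inj_on (\<lambda>(b :: bool, u :: nat list). (b, u, 0 :: nat)) (UNIV \<times> tree_nodes r s)"
    by (auto simp: inj_on_def)
  ultimately show ?thesis
    by (simp add: card_image card_cartesian_product card_tree_nodes)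
qed

definition bouquet_darts :: "nat \<Rightarrow> nat \<Rightarrow> (nat \<times> nat list \<times> nat) set" where
  "bouquet_darts r s = {(b, u, j). b \<le> r \<and> set u \<subseteq> {0..<r} \<and>
     (length u < s \<and> j \<le> r \<or> length u = s \<and> j = 0)}"

fun bouquet_iv :: "nat \<times> nat list \<times> nat \<Rightarrow> nat \<times> nat list \<times> nat" where
  "bouquet_iv (b, [], 0) = (b, [], 0)"
| "bouquet_iv (b, c # u, 0) = (b, u, Suc c)"
| "bouquet_iv (b, u, Suc j) = (b, j # u, 0)"

fun bouquet_vt :: "nat \<Rightarrow> nat \<times> nat list \<times> nat \<Rightarrow> nat \<times> nat list \<times> nat" where
  "bouquet_vt s (b, u, j) = (if length u = s then (0, u, 0) else (b, u, 0))"

lemma bouquet_darts_iff: "(b, u, j) \<in> bouquet_darts r s \<longleftrightarrow> b \<le> r \<and> set u \<subseteq> {0..<r} \<and>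
   (length u < s \<and> j \<le> r \<or> length u = s \<and> j = 0)"
  by (simp add: bouquet_darts_def)

lemma bouquet_iv_fixed_iff: "bouquet_iv d = d \<longleftrightarrow> (\<exists>b. d = (b, [], 0))"
  by (cases d rule: bouquet_iv.cases) auto

lemma bouquet_rise_le: "node_depth d \<le> Suc (node_depth (bouquet_iv d))"
  and bouquet_leave_top: "bouquet_iv d \<noteq> d \<Longrightarrow> node_depth d = 0 \<Longrightarrow> node_depth (bouquet_iv d) = 1"
  by (cases d rule: bouquet_iv.cases; auto)+

context
  fixes r s :: nat
  assumes s_pos: "0 < s"
begin

lemma bouquet_iv_in: "d \<in> bouquet_darts r s \<Longrightarrow> bouquet_iv d \<in> bouquet_darts r s"
  by (cases d rule: bouquet_iv.cases) (auto simp: bouquet_darts_iff)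

lemma bouquet_iv_iv: "d \<in> bouquet_darts r s \<Longrightarrow> bouquet_iv (bouquet_iv d) = d"
  by (cases d rule: bouquet_iv.cases) (auto simp: bouquet_darts_iff)

lemma dart_graph_bouquet: "dart_graph (bouquet_darts r s) bouquet_iv (bouquet_vt s)"
proof
  have "bouquet_darts r s \<subseteq> {0..r} \<times> tree_nodes r s \<times> {0..r}"
    by (auto simp: bouquet_darts_def tree_nodes_def)
  then show "finite (bouquet_darts r s)"
    using finite_tree_nodes finite_subset by fastforce
  fix d assume d: "d \<in> bouquet_darts r s"
  then show "bouquet_iv d \<in> bouquet_darts r s" "bouquet_iv (bouquet_iv d) = d"
    by (simp_all add: bouquet_iv_in bouquet_iv_iv)
  obtain b u j where "d = (b, u, j)"
    by (cases d)
  then show "bouquet_vt s d \<in> bouquet_darts r s" "bouquet_vt s (bouquet_vt s d) = bouquet_vt s d"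
    using d s_pos by (auto simp: bouquet_darts_iff)
qed

lemma bouquet_descend:
  assumes "d' \<in> bouquet_darts r s"
    and down: "node_depth (bouquet_iv d) = Suc (node_depth d)" "node_depth (bouquet_iv d) < s"
    and "bouquet_vt s d' = bouquet_vt s (bouquet_iv d)" "d' \<noteq> bouquet_iv d"
  shows "node_depth (bouquet_iv d') = Suc (node_depth d')"
proof -
  obtain b u j where d: "d = (b, u, j)"
    by (cases d)
  have "\<exists>j0. bouquet_iv d = (b, j0 # u, 0)"
    using down unfolding d by (cases "(b, u, j)" rule: bouquet_iv.cases) auto
  then obtain j0 where d_iv: "bouquet_iv d = (b, j0 # u, 0)"
    by blast
  obtain j' where "d' = (b, j0 # u, j')" "j' \<noteq> 0"
    using assms(4,5) down(2) d_iv by (cases d') (auto split: if_splits)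
  then show ?thesis
    by (cases j') auto
qed

lemma semi_dist_bouquet: "semi_dist_ge (2 * s) (bouquet_darts r s) bouquet_iv (bouquet_vt s)"
  unfolding semi_dist_ge_def
proof (intro allI impI)
  fix ws assume ws: "nb_walk (bouquet_darts r s) bouquet_iv (bouquet_vt s) ws \<and> ws \<noteq> [] \<and>
    bouquet_iv (bouquet_vt s (hd ws)) = bouquet_vt s (hd ws) \<and>
    bouquet_iv (bouquet_vt s (bouquet_iv (last ws))) = bouquet_vt s (bouquet_iv (last ws))"
  have top: "node_depth d = 0" if "bouquet_iv (bouquet_vt s d) = bouquet_vt s d" for d
    using that bouquet_iv_fixed_iff[of "bouquet_vt s d"] by (cases d) (auto split: if_splits)
  interpret depth_walk "bouquet_darts r s" bouquet_iv "bouquet_vt s" node_depth s ws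
  proof
    show "nb_walk (bouquet_darts r s) bouquet_iv (bouquet_vt s) ws" "ws \<noteq> []"
      "node_depth (hd ws) = 0" "node_depth (bouquet_iv (last ws)) = 0"
      using ws top by auto
    fix d d' assume "d \<in> bouquet_darts r s"
    then show "bouquet_iv d \<in> bouquet_darts r s" "node_depth (bouquet_vt s d) = node_depth d"
      "bouquet_iv d \<noteq> d \<Longrightarrow> node_depth d \<le> Suc (node_depth (bouquet_iv d))"
      "bouquet_iv d \<noteq> d \<Longrightarrow> node_depth d = 0 \<Longrightarrow> 0 < s \<Longrightarrow> node_depth (bouquet_iv d) = 1"
      by (simp_all add: bouquet_iv_in bouquet_rise_le bouquet_leave_top) (cases d; simp)
    assume "d' \<in> bouquet_darts r s"
      "node_depth (bouquet_iv d) = Suc (node_depth d)" "node_depth (bouquet_iv d) < s"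
      "bouquet_vt s d' = bouquet_vt s (bouquet_iv d)" "d' \<noteq> bouquet_iv d"
    then show "node_depth (bouquet_iv d') = Suc (node_depth d')"
      by (rule bouquet_descend)
  qed
  show "2 * s \<le> length ws"
    by (rule length_ge)
qed

lemma code_graph_bouquet:
  "code_graph (bouquet_darts r s) bouquet_iv (bouquet_vt s) (leaf_dist s) r (2 * s)"
proof (rule code_graph.intro[OF dart_graph_bouquet], unfold_locales)
  fix d assume d: "d \<in> bouquet_darts r s"
  then obtain b u j where d_eq: "d = (b, u, j)"
    by (cases d)
  show "card {d'\<in>bouquet_darts r s. bouquet_vt s d' = bouquet_vt s d} = Suc r"
  proof (cases "length u = s")
    case True
    then have "{d'\<in>bouquet_darts r s. bouquet_vt s d' = bouquet_vt s d} = (\<lambda>b. (b, u, 0)) ` {0..r}"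
      using d by (auto simp: d_eq bouquet_darts_iff split: if_splits)
    then show ?thesis
      by (simp add: card_image inj_on_def)
  next
    case False
    then have "{d'\<in>bouquet_darts r s. bouquet_vt s d' = bouquet_vt s d} = (\<lambda>j. (b, u, j)) ` {0..r}"
      using d by (auto simp: d_eq bouquet_darts_iff split: if_splits)
    then show ?thesis
      by (simp add: card_image inj_on_def)
  qed
  show "bouquet_iv d = d \<Longrightarrow> bouquet_vt s d = d"
    using bouquet_iv_fixed_iff s_pos by auto
  show "bouquet_vt s d = d \<Longrightarrow> bouquet_vt s (bouquet_iv d) = bouquet_iv d \<Longrightarrow> bouquet_iv d = d"
    using d by (cases d rule: bouquet_iv.cases) (auto split: if_splits)
  show "bouquet_vt s d \<noteq> d \<Longrightarrow> bouquet_vt s (bouquet_iv d) = bouquet_iv d \<Longrightarrow>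
      leaf_dist s (bouquet_iv d) < leaf_dist s (bouquet_vt s d)"
    using d by (cases d rule: bouquet_iv.cases) (auto simp: bouquet_darts_iff split: if_splits)
qed (rule semi_dist_bouquet)

lemma card_bouquet_semi_edges: "card {d\<in>bouquet_darts r s. bouquet_iv d = d} = Suc r"
proof -
  have "{d\<in>bouquet_darts r s. bouquet_iv d = d} = (\<lambda>b. (b, [], 0)) ` {0..r}"
    using bouquet_iv_fixed_iff s_pos by (auto simp: bouquet_darts_iff)
  then show ?thesis
    by (simp add: card_image inj_on_def)
qed

lemma card_bouquet_vertices:
  "card (bouquet_vt s ` bouquet_darts r s) = Suc r * (\<Sum>i\<le>s - 1. r ^ i) + r ^ s"
proof -
  define L where "L = {u. set u \<subseteq> {0..<r} \<and> length u = s}"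
  define inner where "inner = (\<lambda>(b, u). (b, u, 0::nat)) ` ({0..r} \<times> tree_nodes r (s - 1))"
  define leaves where "leaves = (\<lambda>u. (0::nat, u, 0::nat)) ` L"
  have "bouquet_vt s ` bouquet_darts r s =
      inner \<union> leaves"
  proof (intro equalityI subsetI)
    fix x assume "x \<in> bouquet_vt s ` bouquet_darts r s"
    then obtain b u j where "(b, u, j) \<in> bouquet_darts r s" "x = bouquet_vt s (b, u, j)"
      by auto
    then show "x \<in> inner \<union> leaves"
      using s_pos by (cases "length u = s") (auto simp: bouquet_darts_iff tree_nodes_def L_def inner_def leaves_def)
  next
    fix x assume "x \<in> inner \<union> leaves"
    then consider b u where "b \<le> r" "u \<in> tree_nodes r (s - 1)" "x = (b, u, 0)"
      | u where "u \<in> L" "x = (0, u, 0)"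
      by (auto simp: inner_def leaves_def)
    then show "x \<in> bouquet_vt s ` bouquet_darts r s"
    proof cases
      case 1
      then have "length u < s"
        using s_pos by (auto simp: tree_nodes_def)
      then have "x = bouquet_vt s (b, u, 0)" "(b, u, 0) \<in> bouquet_darts r s"
        using 1 by (auto simp: bouquet_darts_iff tree_nodes_def)
      then show ?thesis
        by blast
    next
      case 2
      then have "x = bouquet_vt s (0, u, 0)" "(0, u, 0) \<in> bouquet_darts r s"
        by (auto simp: bouquet_darts_iff L_def)
      then show ?thesis
        by blast
    qed
  qed
  moreover have "length v < s" if "v \<in> tree_nodes r (s - 1)" for v
    using that s_pos by (auto simp: tree_nodes_def)
  then have "inner \<inter> leaves = {}"
    by (auto simp: inner_def leaves_def L_def)
  moreover have "finite L" "card L = r ^ s"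
    using finite_lists_length_eq[of "{0..<r}" s] card_lists_length_eq[of "{0..<r}" s]
    by (simp_all add: L_def)
  ultimately show ?thesis
    using finite_tree_nodes
    by (simp add: inner_def leaves_def card_Un_disjoint card_image inj_on_def card_cartesian_product
        card_tree_nodes)
qed

end

section \<open>Rates\<close>

theorem seq_LRC_of_code_graph:
  fixes D :: "'d::countable set"
  assumes "code_graph D iv vt h r m"
  defines "V \<equiv> real (card (vt ` D))" and "P \<equiv> real (card {d\<in>D. iv d = d})"
  shows "\<exists>n k (C :: (nat \<Rightarrow> bit) set). seq_LRC n k r (Suc m) C \<and>
    real k / real n = ((real r - 1) * V + P) / ((real r + 1) * V + P)"
proof -
  obtain D' :: "nat set" and iv' vt' h' N where cover: "code_graph D' iv' vt' h' r m"
    "girth_gt (Suc m) D' iv' vt'" "0 < N" "card {d\<in>D'. iv' d = d} = N * card {d\<in>D. iv d = d}"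
    "card (vt' ` D') = N * card (vt ` D)"
    using code_graph_large_girth[OF assms(1)] by blast
  interpret G: code_graph D' iv' vt' h' r m
    by (rule cover(1))
  define n where "n = card (edge iv' ` D')"
  define k where "k = card (edge iv' ` G.info_darts)"
  obtain C :: "(nat \<Rightarrow> bit) set" where "seq_LRC n k r (Suc m) C"
    using G.seq_LRC_graph_code[OF cover(2)] by (auto simp: n_def k_def)
  moreover have "2 * n = Suc r * card (vt' ` D') + card {d\<in>D'. iv' d = d}" "k + card (vt' ` D') = n"
    using G.card_edges G.card_darts G.card_info_edges by (simp_all add: n_def k_def)
  then have "2 * real n = real N * ((real r + 1) * V + P)" "2 * real k = real N * ((real r - 1) * V + P)"
    unfolding V_def P_def cover(4,5) by (simp_all add: algebra_simps flip: of_nat_mult of_nat_add)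
  then have "real k / real n = (real N * ((real r - 1) * V + P)) / (real N * ((real r + 1) * V + P))"
    by (metis mult_divide_mult_cancel_left_if zero_neq_numeral)
  then have "real k / real n = ((real r - 1) * V + P) / ((real r + 1) * V + P)"
    using cover(3) by simp
  ultimately show ?thesis
    by blast
qed

lemma twin_rate:
  fixes r :: real and s :: nat
  defines "S \<equiv> \<Sum>i\<le>s. r ^ i"
  shows "((r - 1) * (2 * S) + 2) / ((r + 1) * (2 * S) + 2) =
    r ^ (s + 1) / (r ^ (s + 1) + 2 * (\<Sum>i = 0..s. r ^ i))"
proof -
  have geo: "(r - 1) * S = r ^ (s + 1) - 1"
    using sum_gp_basic[of r s] by (simp add: S_def algebra_simps)
  have "(r - 1) * (2 * S) + 2 = 2 * r ^ (s + 1)" "(r + 1) * (2 * S) + 2 = 2 * (r ^ (s + 1) + 2 * S)"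
    using geo by (simp_all add: algebra_simps)
  then have "((r - 1) * (2 * S) + 2) / ((r + 1) * (2 * S) + 2) = r ^ (s + 1) / (r ^ (s + 1) + 2 * S)"
    by (metis mult_divide_mult_cancel_left_if zero_neq_numeral)
  then show ?thesis
    by (simp add: S_def atLeast0AtMost)
qed

lemma bouquet_rate:
  fixes r :: real and s :: nat
  assumes "0 < s"
  defines "S \<equiv> \<Sum>i\<le>s - 1. r ^ i"
  shows "((r - 1) * ((r + 1) * S + r ^ s) + (r + 1)) / ((r + 1) * ((r + 1) * S + r ^ s) + (r + 1)) =
    r ^ (s + 1) / (r ^ (s + 1) + 2 * (\<Sum>i = 1..s. r ^ i) + 1)"
proof -
  obtain s' where s: "s = Suc s'"
    using assms(1) gr0_implies_Suc by blast
  have geo: "(r - 1) * S = r ^ s - 1"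
    using sum_gp_basic[of r s'] by (simp add: S_def s algebra_simps)
  have "(\<Sum>i = 1..s. r ^ i) = (\<Sum>i = 0..s'. r ^ Suc i)"
    unfolding s One_nat_def sum.atLeast_Suc_atMost_Suc_shift by (simp add: comp_def)
  also have "\<dots> = r * S"
    by (simp add: S_def s sum_distrib_left atLeast0AtMost)
  finally have shift: "(\<Sum>i = 1..s. r ^ i) = r * S" .
  have "(r - 1) * ((r + 1) * S + p) + (r + 1) = 2 * (r * p)"
    and "(r + 1) * ((r + 1) * S + p) + (r + 1) = 2 * (r * p + 2 * (r * S) + 1)"
    if "(r - 1) * S = p - 1" for p
    using that by algebra+
  then have "(r - 1) * ((r + 1) * S + r ^ s) + (r + 1) = 2 * r ^ (s + 1)"
    and "(r + 1) * ((r + 1) * S + r ^ s) + (r + 1) = 2 * (r ^ (s + 1) + 2 * (r * S) + 1)"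
    using geo by simp_all
  then have "((r - 1) * ((r + 1) * S + r ^ s) + (r + 1)) / ((r + 1) * ((r + 1) * S + r ^ s) + (r + 1)) =
      r ^ (s + 1) / (r ^ (s + 1) + 2 * (r * S) + 1)"
    by (metis mult_divide_mult_cancel_left_if zero_neq_numeral)
  then show ?thesis
    unfolding shift .
qed

text \<open>The construction works for every r.\<close>

theorem mainTheorem11:
  fixes r t :: nat
  assumes "r \<ge> 3" and "t \<ge> 2"
  defines "s \<equiv> (t - 1) div 2"
  shows "\<exists>n k (C :: (nat \<Rightarrow> bit) set). seq_LRC n k r t C \<and>
           (if even t
            then real k / real n = real r ^ (s + 1) / (real r ^ (s + 1) + 2 * (\<Sum>i = 0..s. real r ^ i))
            else real k / real n = real r ^ (s + 1) / (real r ^ (s + 1) + 2 * (\<Sum>i = 1..s. real r ^ i) + 1))"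
proof (cases "even t")
  case True
  then have "t = Suc (Suc (2 * s))"
    using assms(2) by (auto simp: s_def elim!: evenE)
  then show ?thesis
    using seq_LRC_of_code_graph[OF code_graph_twin[of r s]] True twin_rate[of "real r" s]
    by (simp add: card_twin_semi_edges card_twin_vertices)
next
  case False
  then have "t = Suc (2 * s)" "0 < s"
    using assms(2) by (auto simp: s_def elim!: oddE)
  then show ?thesis
    using seq_LRC_of_code_graph[OF code_graph_bouquet[of s r]] False bouquet_rate[of s "real r"]
    by (simp add: card_bouquet_semi_edges card_bouquet_vertices algebra_simps)
qed

end
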